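(* Let $(X_1,X_2)$ be an extensible pair and $\gamma\in\mathcal H_2$. Then the following are equivalent: (i) $|\gamma|_{(X_1,X_2)}=0$; (ii) $\gamma^{(k)}\in Q(Z_k)$ for all sufficiently large $k$; (iii) $\gamma^{(k)}\in Q(Z_k)$ for infinitely many values of $k$.
   Context: Marked Dynkin diagram $(X,\xi)$: Dynkin diagram of a symmetrizable generalized Cartan matrix $C(X)$ with distinguished node $\xi$; $\det X=\det C(X)$; $X(-1)$ is $X$ minus $\xi$ ($\det\emptyset=1$); $\Delta_X=\det X-\det X(-1)$. $(X_1,X_2)$ is an extensible pair if $\det X_i\ne0$, $\Delta_i:=\Delta_{X_i}\ne0$, $\gcd(\det X_i,\Delta_i)=1$ ($i=1,2$), $\gcd(\Delta_1,\Delta_2)=1$. $Z_k$ is obtained from the disjoint union of $X_1$, a path $A_k$ (nodes $1,\dots,k$) and $X_2$ by adding simple edges $\xi_1$—$1$ and $k$—$\xi_2$; $\omega_p,\alpha_p$ are fundamental weights and simple roots of $\mathfrak g(Z_k)$, $Q(Z_k)$ the root lattice. Numberings: if $X$ has $d$ nodes, a numbering is a bijection $\epsilon:N(X)\to\{1,\dots,d\}$ with $\epsilon(\xi)=d$. $X(m)$ ($m\ge0$) is $X$ with a path of $m$ new nodes $\xi-1-2-\cdots-m$ attached at $\xi$, numbered by $j(p)=\epsilon(p)$ on $X$ and $j=d+t$ on the $t$-th new node; $\bar\omega^{(m)}$ is the fundamental weight of $\mathfrak g(X(m))$ at the node with $j=d+m$. For $X$ extensible ($\det X\ne0$, $\Delta_X\ne0$,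 $\gcd(\det X,\Delta_X)=1$) there is (by earlier work of Kleber and the author) a unique integer sequence $(a_i)_{i\ge1}$ such that for all $m\ge0$ with $\det X(m)\ne0$ and all $p\in X(m)$, $-\Delta_X\omega_p-a_{j(p)}\bar\omega^{(m)}\in Q(X(m))$. Fix numberings $\epsilon_1,\epsilon_2$ of $X_1,X_2$ ($d_i$ = number of nodes of $X_i$) and let $(a_i^{(1)}),(a_i^{(2)})$ be the corresponding sequences. On $Z_k$ define numberings $i,\bar\imath$: $i(p)=\epsilon_1(p)$ for $p\in X_1$, $i(p)=d_1+t$ for the $t$-th node of $A_k$, $i(p)=d_1+d_2+k+1-\epsilon_2(p)$ for $p\in X_2$; $\bar\imath(p)=\epsilon_2(p)$ for $p\in X_2$, $\bar\imath(p)=d_2+k+1-t$ for the $t$-th node of $A_k$, $\bar\imath(p)=d_1+d_2+k+1-\epsilon_1(p)$ for $p\in X_1$. $\mathcal H_1$ is the set of integer sequences $x=(x_1,x_2,\dots)$ with finitely many nonzero terms, $\ell(x)=\max\{i:x_i\ne0\}$; $\mathcal H_2=\mathcal H_1\times\mathcal H_1$. For $\gamma=(x,y)$: $\mathrm{ls}(\gamma)=\max(\ell(x),d_1)$, $\mathrm{rs}(\gamma)=\max(\ell(y),d_2)$, $\ell(\gamma)=\mathrm{ls}+\mathrm{rs}$, and for $k\ge\ell(\gamma)-d_1-d_2$, $\gamma^{(k)}=\sum_{p\in Z_k}(x_{i(p)}+y_{\bar\imath(p)})\omega_p$. The number of boxes is $|\gamma|_{(X_1,X_2)}=\Delta_2\sum_ix_ia_i^{(1)}-\Delta_1\sum_iy_ia_i^{(2)}$.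 *)

theory Defs
  imports Complex_Main "HOL-Combinatorics.Permutations"
begin

text \<open>A (marked) Dynkin diagram is represented by its generalized Cartan matrix
  C :: node => node => int on a finite node set N (the diagram determines the
  symmetrizable GCM and vice versa).\<close>

definition gcm :: "'n set \<Rightarrow> ('n \<Rightarrow> 'n \<Rightarrow> int) \<Rightarrow> bool" where
  "gcm N C \<longleftrightarrow> finite N \<and> (\<forall>i\<in>N. C i i = 2) \<and>
     (\<forall>i\<in>N. \<forall>j\<in>N. i \<noteq> j \<longrightarrow> C i j \<le> 0) \<and>
     (\<forall>i\<in>N. \<forall>j\<in>N. C i j = 0 \<longleftrightarrow> C j i = 0)"

definition symmetrizable :: "'n set \<Rightarrow> ('n \<Rightarrow> 'n \<Rightarrow> int) \<Rightarrow> bool" where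
  "symmetrizable N C \<longleftrightarrow> (\<exists>e :: 'n \<Rightarrow> real. (\<forall>i\<in>N. e i > 0) \<and>
     (\<forall>i\<in>N. \<forall>j\<in>N. e i * of_int (C i j) = e j * of_int (C j i)))"

definition sym_gcm :: "'n set \<Rightarrow> ('n \<Rightarrow> 'n \<Rightarrow> int) \<Rightarrow> bool" where
  "sym_gcm N C \<longleftrightarrow> gcm N C \<and> symmetrizable N C"

text \<open>Determinant (Leibniz formula) of the matrix restricted to the finite node set N;
  det of the empty diagram is 1.\<close>
definition mdet :: "'n set \<Rightarrow> ('n \<Rightarrow> 'n \<Rightarrow> int) \<Rightarrow> int" where
  "mdet N C = (\<Sum>\<sigma>\<in>{\<sigma>. \<sigma> permutes N}. sign \<sigma> * (\<Prod>p\<in>N. C p (\<sigma> p)))"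

definition Delta :: "'n set \<Rightarrow> ('n \<Rightarrow> 'n \<Rightarrow> int) \<Rightarrow> 'n \<Rightarrow> int" where
  "Delta N C \<xi> = mdet N C - mdet (N - {\<xi>}) C"

definition extensible :: "'n set \<Rightarrow> ('n \<Rightarrow> 'n \<Rightarrow> int) \<Rightarrow> 'n \<Rightarrow> bool" where
  "extensible N C \<xi> \<longleftrightarrow> mdet N C \<noteq> 0 \<and> Delta N C \<xi> \<noteq> 0 \<and>
     gcd (mdet N C) (Delta N C \<xi>) = 1"

text \<open>Weights are written in coordinates w.r.t. the fundamental weights omega_p
  (a function node => int). Kac's convention: alpha_q = sum_p C p q * omega_p.\<close>
definition in_root_lattice :: "'n set \<Rightarrow> ('n \<Rightarrow> 'n \<Rightarrow> int) \<Rightarrow> ('n \<Rightarrow> int) \<Rightarrow> bool" where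
  "in_root_lattice N C w \<longleftrightarrow> (\<exists>c :: 'n \<Rightarrow> int. \<forall>p\<in>N. w p = (\<Sum>q\<in>N. C p q * c q))"

definition fund_weight :: "'n \<Rightarrow> ('n \<Rightarrow> int)" where
  "fund_weight p = (\<lambda>q. if q = p then 1 else 0)"

definition path_entry :: "nat \<Rightarrow> nat \<Rightarrow> int" where
  "path_entry s t = (if s = t then 2 else if s = t + 1 \<or> t = s + 1 then -1 else 0)"

definition ext_nodes :: "'n set \<Rightarrow> nat \<Rightarrow> ('n + nat) set" where
  "ext_nodes N m = Inl ` N \<union> Inr ` {1..m}"

definition ext_mat :: "('n \<Rightarrow> 'n \<Rightarrow> int) \<Rightarrow> 'n \<Rightarrow> ('n + nat) \<Rightarrow> ('n + nat) \<Rightarrow> int" where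
  "ext_mat C \<xi> u v = (case (u, v) of
      (Inl p, Inl q) \<Rightarrow> C p q
    | (Inr s, Inr t) \<Rightarrow> path_entry s t
    | (Inl p, Inr t) \<Rightarrow> (if p = \<xi> \<and> t = 1 then -1 else 0)
    | (Inr s, Inl q) \<Rightarrow> (if q = \<xi> \<and> s = 1 then -1 else 0))"

definition ext_num :: "('n \<Rightarrow> nat) \<Rightarrow> nat \<Rightarrow> ('n + nat) \<Rightarrow> nat" where
  "ext_num \<epsilon> d u = (case u of Inl p \<Rightarrow> \<epsilon> p | Inr t \<Rightarrow> d + t)"

definition ext_top :: "'n \<Rightarrow> nat \<Rightarrow> ('n + nat)" where
  "ext_top \<xi> m = (if m = 0 then Inl \<xi> else Inr m)"

definition a_prop :: "'n set \<Rightarrow> ('n \<Rightarrow> 'n \<Rightarrow> int) \<Rightarrow> 'n \<Rightarrow> ('n \<Rightarrow> nat) \<Rightarrow> (nat \<Rightarrow> int) \<Rightarrow> bool" where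
  "a_prop N C \<xi> \<epsilon> a \<longleftrightarrow>
     (\<forall>m. mdet (ext_nodes N m) (ext_mat C \<xi>) \<noteq> 0 \<longrightarrow>
        (\<forall>p\<in>ext_nodes N m. in_root_lattice (ext_nodes N m) (ext_mat C \<xi>)
           (\<lambda>q. - Delta N C \<xi> * fund_weight p q
                - a (ext_num \<epsilon> (card N) p) * fund_weight (ext_top \<xi> m) q)))"

text \<open>The unique such sequence (index 0 is unused; normalised to 0).\<close>
definition a_seq :: "'n set \<Rightarrow> ('n \<Rightarrow> 'n \<Rightarrow> int) \<Rightarrow> 'n \<Rightarrow> ('n \<Rightarrow> nat) \<Rightarrow> (nat \<Rightarrow> int)" where
  "a_seq N C \<xi> \<epsilon> = (THE a. a_prop N C \<xi> \<epsilon> a \<and> a 0 = 0)"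

definition numbering :: "'n set \<Rightarrow> 'n \<Rightarrow> ('n \<Rightarrow> nat) \<Rightarrow> bool" where
  "numbering N \<xi> \<epsilon> \<longleftrightarrow> bij_betw \<epsilon> N {1..card N} \<and> \<epsilon> \<xi> = card N"

definition marked_diagram :: "'n set \<Rightarrow> ('n \<Rightarrow> 'n \<Rightarrow> int) \<Rightarrow> 'n \<Rightarrow> bool" where
  "marked_diagram N C \<xi> \<longleftrightarrow> sym_gcm N C \<and> \<xi> \<in> N"

definition extensible_pair ::
  "'a set \<Rightarrow> ('a \<Rightarrow> 'a \<Rightarrow> int) \<Rightarrow> 'a \<Rightarrow> 'b set \<Rightarrow> ('b \<Rightarrow> 'b \<Rightarrow> int) \<Rightarrow> 'b \<Rightarrow> bool" where
  "extensible_pair N1 C1 \<xi>1 N2 C2 \<xi>2 \<longleftrightarrow>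
     extensible N1 C1 \<xi>1 \<and> extensible N2 C2 \<xi>2 \<and> gcd (Delta N1 C1 \<xi>1) (Delta N2 C2 \<xi>2) = 1"

definition Z_nodes :: "'a set \<Rightarrow> 'b set \<Rightarrow> nat \<Rightarrow> (('a + nat) + 'b) set" where
  "Z_nodes N1 N2 k = Inl ` (Inl ` N1 \<union> Inr ` {1..k}) \<union> Inr ` N2"

definition Z_mat :: "('a \<Rightarrow> 'a \<Rightarrow> int) \<Rightarrow> 'a \<Rightarrow> ('b \<Rightarrow> 'b \<Rightarrow> int) \<Rightarrow> 'b \<Rightarrow> nat \<Rightarrow>
    (('a + nat) + 'b) \<Rightarrow> (('a + nat) + 'b) \<Rightarrow> int" where
  "Z_mat C1 \<xi>1 C2 \<xi>2 k u v = (case (u, v) of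
      (Inl u', Inl v') \<Rightarrow> ext_mat C1 \<xi>1 u' v'
    | (Inr p, Inr q) \<Rightarrow> C2 p q
    | (Inl (Inr t), Inr q) \<Rightarrow> (if t = k \<and> q = \<xi>2 then -1 else 0)
    | (Inr p, Inl (Inr t)) \<Rightarrow> (if t = k \<and> p = \<xi>2 then -1 else 0)
    | _ \<Rightarrow> 0)"

definition Z_num :: "('a \<Rightarrow> nat) \<Rightarrow> nat \<Rightarrow> ('b \<Rightarrow> nat) \<Rightarrow> nat \<Rightarrow> nat \<Rightarrow> (('a + nat) + 'b) \<Rightarrow> nat" where
  "Z_num \<epsilon>1 d1 \<epsilon>2 d2 k u = (case u of
      Inl (Inl p) \<Rightarrow> \<epsilon>1 p
    | Inl (Inr t) \<Rightarrow> d1 + t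
    | Inr q \<Rightarrow> d1 + d2 + k + 1 - \<epsilon>2 q)"

definition Z_numbar :: "('a \<Rightarrow> nat) \<Rightarrow> nat \<Rightarrow> ('b \<Rightarrow> nat) \<Rightarrow> nat \<Rightarrow> nat \<Rightarrow> (('a + nat) + 'b) \<Rightarrow> nat" where
  "Z_numbar \<epsilon>1 d1 \<epsilon>2 d2 k u = (case u of
      Inr q \<Rightarrow> \<epsilon>2 q
    | Inl (Inr t) \<Rightarrow> d2 + k + 1 - t
    | Inl (Inl p) \<Rightarrow> d1 + d2 + k + 1 - \<epsilon>1 p)"

text \<open>H_1: integer sequences indexed from 1 with finitely many nonzero terms
  (index 0 unused, required to be 0).\<close>
definition H1 :: "(nat \<Rightarrow> int) set" where
  "H1 = {x. finite {i. x i \<noteq> 0} \<and> x 0 = 0}"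

definition seq_len :: "(nat \<Rightarrow> int) \<Rightarrow> nat" where
  "seq_len x = Max (insert 0 {i. x i \<noteq> 0})"

definition gamma_len :: "nat \<Rightarrow> nat \<Rightarrow> (nat \<Rightarrow> int) \<Rightarrow> (nat \<Rightarrow> int) \<Rightarrow> nat" where
  "gamma_len d1 d2 x y = max (seq_len x) d1 + max (seq_len y) d2"

definition gamma_k :: "('a \<Rightarrow> nat) \<Rightarrow> nat \<Rightarrow> ('b \<Rightarrow> nat) \<Rightarrow> nat \<Rightarrow> (nat \<Rightarrow> int) \<Rightarrow> (nat \<Rightarrow> int)
    \<Rightarrow> nat \<Rightarrow> (('a + nat) + 'b) \<Rightarrow> int" where
  "gamma_k \<epsilon>1 d1 \<epsilon>2 d2 x y k p = x (Z_num \<epsilon>1 d1 \<epsilon>2 d2 k p) + y (Z_numbar \<epsilon>1 d1 \<epsilon>2 d2 k p)"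

definition boxes :: "'a set \<Rightarrow> ('a \<Rightarrow> 'a \<Rightarrow> int) \<Rightarrow> 'a \<Rightarrow> ('a \<Rightarrow> nat) \<Rightarrow>
    'b set \<Rightarrow> ('b \<Rightarrow> 'b \<Rightarrow> int) \<Rightarrow> 'b \<Rightarrow> ('b \<Rightarrow> nat) \<Rightarrow> (nat \<Rightarrow> int) \<Rightarrow> (nat \<Rightarrow> int) \<Rightarrow> int" where
  "boxes N1 C1 \<xi>1 \<epsilon>1 N2 C2 \<xi>2 \<epsilon>2 x y =
     Delta N2 C2 \<xi>2 * (\<Sum>i\<in>{i. x i \<noteq> 0}. x i * a_seq N1 C1 \<xi>1 \<epsilon>1 i)
   - Delta N1 C1 \<xi>1 * (\<Sum>i\<in>{i. y i \<noteq> 0}. y i * a_seq N2 C2 \<xi>2 \<epsilon>2 i)"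

end

theory Submission
  imports Defs "Jordan_Normal_Form.Determinant"
begin

text \<open>Write \<open>D = det X\<close>, \<open>D' = det X(-1)\<close> and \<open>\<Delta> = D - D'\<close>. When \<open>D \<noteq> 0\<close> and
  \<open>gcd(D, D') = 1\<close>, Cramer's rule and a weak form of Jacobi's theorem on the adjugate show that a
  weight \<open>v\<close> of \<open>X\<close> lies in \<open>Q(X)\<close> with \<open>\<xi>\<close>-coordinate \<open>z\<close> exactly when
  \<open>D z = \<Sum>\<^sub>p adj(\<xi>, p) v\<^sub>p\<close>. Along a path attached at \<open>\<xi>\<close> the root coordinates satisfy a
  second order recurrence, so membership in \<open>Q(X(m))\<close> reduces to the single equation
  \<open>(D + m \<Delta>) s = \<lambda>(w)\<close> for the top coordinate \<open>s\<close> and an explicit linear form \<open>\<lambda>\<close>, whose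
  values at the fundamental weights are the sequence \<open>a\<close>. Gluing \<open>X\<^sub>1(k)\<close> and \<open>X\<^sub>2\<close> along the
  edge \<open>k - \<xi>\<^sub>2\<close> turns \<open>\<gamma>\<^sup>(\<^sup>k\<^sup>) \<in> Q(Z\<^sub>k)\<close> into a 2 \<times> 2 integer system, which is solvable iff
  \<open>det Z\<^sub>k\<close> divides \<open>|\<gamma>|\<close>. Since \<open>det Z\<^sub>k = D\<^sub>1 D\<^sub>2 - D\<^sub>1' D\<^sub>2' + k \<Delta>\<^sub>1 \<Delta>\<^sub>2\<close> grows linearly
  in \<open>k\<close>, this happens for all large \<open>k\<close>, or for infinitely many \<open>k\<close>, exactly when \<open>|\<gamma>| = 0\<close>.\<close>

section \<open>Determinants and adjugates on a finite node set\<close>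

lemma prod_square_dvd_if_two_factors_dvd:
  fixes f :: "'i \<Rightarrow> 'a::comm_semiring_1"
  assumes "finite I" "i \<in> I" "j \<in> I" "i \<noteq> j" "d dvd f i" "d dvd f j"
  shows "d * d dvd (\<Prod>k\<in>I. f k)"
proof -
  have "(\<Prod>k\<in>I. f k) = (f i * f j) * (\<Prod>k\<in>I - {i} - {j}. f k)"
    using assms by (simp add: prod.remove[of I i] prod.remove[of "I - {i}" j] ac_simps)
  moreover have "d * d dvd f i * f j" using assms by (simp add: mult_dvd_mono)
  ultimately show ?thesis by simp
qed

lemma square_dvd_det_if_two_columns_dvd:
  fixes B :: "'a::comm_ring_1 mat"
  assumes B: "B \<in> carrier_mat n n" and "j1 < n" "j2 < n" "j1 \<noteq> j2"
    and col1: "\<And>i. i < n \<Longrightarrow> d dvd B $$ (i, j1)"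
    and col2: "\<And>i. i < n \<Longrightarrow> d dvd B $$ (i, j2)"
  shows "d * d dvd det B"
  unfolding det_def'[OF B]
proof (rule dvd_sum)
  fix p assume "p \<in> {p. p permutes {0..<n}}"
  hence p: "p permutes {0..<n}" by simp
  let ?i1 = "Hilbert_Choice.inv p j1" and ?i2 = "Hilbert_Choice.inv p j2"
  have i1: "?i1 \<in> {0..<n}" "p ?i1 = j1" and i2: "?i2 \<in> {0..<n}" "p ?i2 = j2"
    using assms p by (auto simp: permutes_inverses(1) permutes_in_image permutes_inv)
  have "?i1 \<noteq> ?i2" using i1 i2 assms by metis
  have "d * d dvd (\<Prod>i = 0..<n. B $$ (i, p i))"
    by (rule prod_square_dvd_if_two_factors_dvd[OF _ i1(1) i2(1) \<open>?i1 \<noteq> ?i2\<close>])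
      (use i1 i2 col1 col2 in auto)
  thus "d * d dvd signof p * (\<Prod>i = 0..<n. B $$ (i, p i))" by simp
qed

lemma mult_mat_vec_col_adj_mat:
  assumes A: "A \<in> carrier_mat n n" and j: "j < n"
  shows "A *\<^sub>v col (adj_mat A) j = det A \<cdot>\<^sub>v unit_vec n j"
proof -
  have "adj_mat A \<in> carrier_mat n n" using adj_mat[OF A] by simp
  hence "A *\<^sub>v col (adj_mat A) j = col (A * adj_mat A) j"
    using A j by simp
  also have "\<dots> = col (det A \<cdot>\<^sub>m 1\<^sub>m n) j" using adj_mat[OF A] by simp
  also have "\<dots> = det A \<cdot>\<^sub>v unit_vec n j"
    using j by (auto simp: col_def unit_vec_def)
  finally show ?thesis .
qed

text \<open>A weak form of Jacobi's theorem on the 2 \<times> 2 minors of the adjugate. Cramer's rule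
  is applied twice: first column \<open>\<xi>\<close> of \<open>A\<close> is replaced by \<open>A x\<close> with \<open>x\<close> the column \<open>\<xi>\<close>
  of the adjugate, then column \<open>q\<close> by \<open>A z\<close>, where \<open>z\<close> is the combination of the adjugate
  columns \<open>\<xi>\<close> and \<open>p\<close> vanishing at \<open>\<xi>\<close>. Both new columns are divisible by \<open>det A\<close>.\<close>
lemma det_dvd_adj_mat_minor:
  fixes A :: "'a::idom mat"
  assumes A: "A \<in> carrier_mat n n" and xi: "\<xi> < n" and q: "q < n" and p: "p < n"
    and "det A \<noteq> 0"
  defines "M \<equiv> adj_mat A"
  shows "det A dvd M $$ (\<xi>, \<xi>) * (M $$ (\<xi>, \<xi>) * M $$ (q, p) - M $$ (\<xi>, p) * M $$ (q, \<xi>))"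
proof (cases "q = \<xi>")
  case True thus ?thesis by simp
next
  case q_xi: False
  define D where "D = det A"
  have M: "M \<in> carrier_mat n n" using adj_mat[OF A] by (simp add: M_def)
  define x where "x = col M \<xi>"
  define y where "y = col M p"
  have x: "x \<in> carrier_vec n" and y: "y \<in> carrier_vec n" using M by (auto simp: x_def y_def)
  have Ax: "A *\<^sub>v x = D \<cdot>\<^sub>v unit_vec n \<xi>"
    unfolding x_def M_def D_def by (rule mult_mat_vec_col_adj_mat[OF A xi])
  have Ay: "A *\<^sub>v y = D \<cdot>\<^sub>v unit_vec n p"
    unfolding y_def M_def D_def by (rule mult_mat_vec_col_adj_mat[OF A p])
  define z where "z = (x $ \<xi>) \<cdot>\<^sub>v y - (y $ \<xi>) \<cdot>\<^sub>v x"
  have z: "z \<in> carrier_vec n" using x y by (simp add: z_def)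
  have z_xi: "z $ \<xi> = 0" using x y xi by (simp add: z_def)
  have z_q: "z $ q = M $$ (\<xi>, \<xi>) * M $$ (q, p) - M $$ (\<xi>, p) * M $$ (q, \<xi>)"
    using x y xi q p M by (simp add: z_def x_def y_def)
  have x_xi: "x $ \<xi> = M $$ (\<xi>, \<xi>)" using M xi by (simp add: x_def)
  have Az: "(A *\<^sub>v z) $ i = x $ \<xi> * (A *\<^sub>v y) $ i - y $ \<xi> * (A *\<^sub>v x) $ i" if i: "i < n" for i
  proof -
    have "(A *\<^sub>v z) $ i = (\<Sum>k<n. A $$ (i,k) * (x $ \<xi> * y $ k - y $ \<xi> * x $ k))"
      using A z x y i by (simp add: mult_mat_vec_def scalar_prod_def lessThan_atLeast0 z_def)
    also have "\<dots> = x $ \<xi> * (\<Sum>k<n. A $$ (i,k) * y $ k) - y $ \<xi> * (\<Sum>k<n. A $$ (i,k) * x $ k)"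
      by (simp add: sum_distrib_left sum_subtractf algebra_simps)
    also have "\<dots> = x $ \<xi> * (A *\<^sub>v y) $ i - y $ \<xi> * (A *\<^sub>v x) $ i"
      using A x y i by (simp add: mult_mat_vec_def scalar_prod_def lessThan_atLeast0)
    finally show ?thesis .
  qed
  define A' where "A' = replace_col A (A *\<^sub>v x) \<xi>"
  have A': "A' \<in> carrier_mat n n" using A by (simp add: A'_def replace_col_def)
  have det_A': "det A' = x $ \<xi> * D"
    unfolding A'_def D_def by (rule cramer_lemma_mat[OF A x xi])
  have A'z: "A' *\<^sub>v z = A *\<^sub>v z"
  proof (rule eq_vecI)
    fix i assume "i < dim_vec (A *\<^sub>v z)"
    hence i: "i < n" using A by simp
    have "(A' *\<^sub>v z) $ i = (\<Sum>k<n. A' $$ (i,k) * z $ k)"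
      using A' z i by (simp add: mult_mat_vec_def scalar_prod_def lessThan_atLeast0)
    also have "\<dots> = (\<Sum>k<n. A $$ (i,k) * z $ k)"
      by (rule sum.cong) (use A i z_xi in \<open>auto simp: A'_def replace_col_def\<close>)
    also have "\<dots> = (A *\<^sub>v z) $ i"
      using A z i by (simp add: mult_mat_vec_def scalar_prod_def lessThan_atLeast0)
    finally show "(A' *\<^sub>v z) $ i = (A *\<^sub>v z) $ i" .
  qed (use A A' in auto)
  define B where "B = replace_col A' (A' *\<^sub>v z) q"
  have B: "B \<in> carrier_mat n n" using A' by (simp add: B_def replace_col_def)
  have "D * D dvd det B"
  proof (rule square_dvd_det_if_two_columns_dvd[OF B xi q q_xi[symmetric]])
    fix i assume i: "i < n"
    have "B $$ (i, \<xi>) = (A *\<^sub>v x) $ i"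
      using i A A' q_xi xi q by (simp add: B_def A'_def replace_col_def)
    thus "D dvd B $$ (i, \<xi>)" using i by (simp add: Ax)
    have "B $$ (i, q) = (A *\<^sub>v z) $ i"
      using i A A' q by (simp add: B_def replace_col_def A'z)
    thus "D dvd B $$ (i, q)" using i A unfolding Az[OF i] Ax Ay by simp
  qed
  moreover have "det B = z $ q * (x $ \<xi> * D)"
    unfolding B_def det_A'[symmetric] by (rule cramer_lemma_mat[OF A' z q])
  ultimately show ?thesis
    using assms(5) by (simp add: D_def z_q x_xi ac_simps)
qed

lemma mdet_eq_det_mat:
  fixes C :: "'n \<Rightarrow> 'n \<Rightarrow> int"
  assumes f: "bij_betw f {0..<n} N"
  shows "mdet N C = det (mat n n (\<lambda>(i,j). C (f i) (f j)))"
proof -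
  let ?h = "map_permutation {0..<n} f"
  let ?g = "inv_into {0..<n} f"
  have g: "bij_betw ?g N {0..<n}" using f by (rule bij_betw_inv_into)
  have inj: "inj_on f {0..<n}" using f by (simp add: bij_betw_def)
  have h: "bij_betw ?h {p. p permutes {0..<n}} {p. p permutes N}"
  proof (rule bij_betw_byWitness[where f'="map_permutation N ?g"])
    show "\<forall>p\<in>{p. p permutes {0..<n}}. map_permutation N ?g (?h p) = p"
      using map_permutation_compose_inv[OF f] f by (auto simp: bij_betw_inv_into_left)
    show "\<forall>p\<in>{p. p permutes N}. ?h (map_permutation N ?g p) = p"
      using map_permutation_compose_inv[OF g] f by (auto simp: bij_betw_inv_into_right)
    show "?h ` {p. p permutes {0..<n}} \<subseteq> {p. p permutes N}"
      using map_permutation_permutes[OF f] by auto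
    show "map_permutation N ?g ` {p. p permutes N} \<subseteq> {p. p permutes {0..<n}}"
      using map_permutation_permutes[OF g] by auto
  qed
  have "mdet N C = (\<Sum>p\<in>{p. p permutes {0..<n}}. sign (?h p) * (\<Prod>u\<in>N. C u (?h p u)))"
    unfolding mdet_def by (rule sum.reindex_bij_betw[OF h, symmetric])
  also have "\<dots> = (\<Sum>p\<in>{p. p permutes {0..<n}}. signof p * (\<Prod>i = 0..<n. C (f i) (f (p i))))"
  proof (rule sum.cong[OF refl])
    fix p assume "p \<in> {p. p permutes {0..<n}}"
    hence p: "p permutes {0..<n}" by simp
    have "(\<Prod>u\<in>N. C u (?h p u)) = (\<Prod>i = 0..<n. C (f i) (?h p (f i)))"
      by (rule prod.reindex_bij_betw[OF f, symmetric])
    also have "\<dots> = (\<Prod>i = 0..<n. C (f i) (f (p i)))"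
      by (rule prod.cong[OF refl]) (simp add: map_permutation_apply[OF inj])
    finally show "sign (?h p) * (\<Prod>u\<in>N. C u (?h p u)) =
        signof p * (\<Prod>i = 0..<n. C (f i) (f (p i)))"
      by (simp add: sign_map_permutation[OF inj p])
  qed
  also have "\<dots> = det (mat n n (\<lambda>(i,j). C (f i) (f j)))"
    by (subst det_def'[of _ n]) auto
  finally show ?thesis .
qed

lemma sum_nodes_eq_mat_mult_entry:
  assumes f: "bij_betw f {0..<n} N" and A: "A \<in> carrier_mat n n" and B: "B \<in> carrier_mat n n"
    and p: "p \<in> N" and r: "r \<in> N"
  defines "g \<equiv> inv_into {0..<n} f"
  shows "(\<Sum>q\<in>N. A $$ (g p, g q) * B $$ (g q, g r)) = (A * B) $$ (g p, g r)"
proof -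
  have g: "g u < n" if "u \<in> N" for u
    using f that by (auto simp: g_def bij_betw_def intro: inv_into_into)
  have "(\<Sum>q\<in>N. A $$ (g p, g q) * B $$ (g q, g r)) = (\<Sum>k = 0..<n. A $$ (g p, k) * B $$ (k, g r))"
    using f by (auto simp: sum.reindex_bij_betw[OF f, symmetric] g_def bij_betw_inv_into_left
        intro: sum.cong)
  also have "\<dots> = (A * B) $$ (g p, g r)"
    using A B g[OF p] g[OF r] by (simp add: times_mat_def scalar_prod_def)
  finally show ?thesis .
qed

lemma bij_betw_enumeration_last:
  assumes "finite N" "\<xi> \<in> N"
  obtains f where "bij_betw f {0..<card N} N" "f (card N - 1) = \<xi>"
proof -
  define n where "n = card N"
  have "n > 0" using assms by (auto simp: n_def card_gt_0_iff)
  obtain g where g: "bij_betw g {0..<n} N" using ex_bij_betw_nat_finite[OF assms(1)] n_def by blast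
  define i where "i = inv_into {0..<n} g \<xi>"
  have i: "i < n" "g i = \<xi>"
    using g assms(2) by (auto simp: i_def bij_betw_def bij_betw_inv_into_right intro: inv_into_into)
  have "Transposition.transpose i (n - 1) permutes {0..<n}"
    using i \<open>n > 0\<close> by (intro permutes_swap_id) auto
  hence "bij_betw (g \<circ> Transposition.transpose i (n - 1)) {0..<n} N"
    by (rule bij_betw_trans[OF permutes_imp_bij g])
  moreover have "(g \<circ> Transposition.transpose i (n - 1)) (n - 1) = \<xi>" using i by simp
  ultimately show ?thesis using that n_def by blast
qed

text \<open>An adjugate is only available through an enumeration of \<open>N\<close>, so the properties used are
  recorded instead of fixing one.\<close>
definition marked_adjugate ::
    "'n set \<Rightarrow> ('n \<Rightarrow> 'n \<Rightarrow> int) \<Rightarrow> 'n \<Rightarrow> ('n \<Rightarrow> 'n \<Rightarrow> int) \<Rightarrow> bool" where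
  "marked_adjugate N C \<xi> adj \<longleftrightarrow>
     (\<forall>p\<in>N. \<forall>r\<in>N. (\<Sum>q\<in>N. C p q * adj q r) = (if p = r then mdet N C else 0)) \<and>
     (\<forall>p\<in>N. \<forall>r\<in>N. (\<Sum>q\<in>N. adj p q * C q r) = (if p = r then mdet N C else 0)) \<and>
     adj \<xi> \<xi> = mdet (N - {\<xi>}) C \<and>
     (mdet N C \<noteq> 0 \<longrightarrow> (\<forall>p\<in>N. \<forall>q\<in>N.
        mdet N C dvd adj \<xi> \<xi> * (adj \<xi> \<xi> * adj q p - adj \<xi> p * adj q \<xi>)))"

lemma marked_adjugate_exists:
  fixes C :: "'n \<Rightarrow> 'n \<Rightarrow> int"
  assumes "finite N" "\<xi> \<in> N"
  shows "\<exists>adj. marked_adjugate N C \<xi> adj"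
proof -
  define n where "n = card N"
  obtain f where f: "bij_betw f {0..<n} N" and f_last: "f (n - 1) = \<xi>"
    using bij_betw_enumeration_last[OF assms] n_def by metis
  have "n > 0" using assms by (auto simp: n_def card_gt_0_iff)
  define g where "g = inv_into {0..<n} f"
  have g: "g u < n" "f (g u) = u" if "u \<in> N" for u
    using f that by (auto simp: g_def bij_betw_def bij_betw_inv_into_right intro: inv_into_into)
  have g_inj: "g u = g v \<longleftrightarrow> u = v" if "u \<in> N" "v \<in> N" for u v
    using g that by metis
  have g_xi: "g \<xi> = n - 1"
    using f f_last \<open>n > 0\<close> by (auto simp: g_def bij_betw_inv_into_left)
  define A where "A = mat n n (\<lambda>(i,j). C (f i) (f j))"
  have A: "A \<in> carrier_mat n n" by (simp add: A_def)
  define M where "M = adj_mat A"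
  have M: "M \<in> carrier_mat n n" "A * M = det A \<cdot>\<^sub>m 1\<^sub>m n" "M * A = det A \<cdot>\<^sub>m 1\<^sub>m n"
    using adj_mat[OF A] by (simp_all add: M_def)
  have det_A: "mdet N C = det A" unfolding A_def by (rule mdet_eq_det_mat[OF f])
  have C_A: "C u v = A $$ (g u, g v)" if "u \<in> N" "v \<in> N" for u v
    using that g by (simp add: A_def)
  define adj where "adj = (\<lambda>u v. M $$ (g u, g v))"
  have right: "(\<Sum>q\<in>N. C p q * adj q r) = (if p = r then mdet N C else 0)" if "p \<in> N" "r \<in> N" for p r
    using sum_nodes_eq_mat_mult_entry[OF f A M(1) that] that g g_inj
    by (simp add: C_A adj_def M(2) det_A g_def[symmetric] cong: sum.cong)
  have left: "(\<Sum>q\<in>N. adj p q * C q r) = (if p = r then mdet N C else 0)" if "p \<in> N" "r \<in> N" for p r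
    using sum_nodes_eq_mat_mult_entry[OF f M(1) A that] that g g_inj
    by (simp add: C_A adj_def M(3) det_A g_def[symmetric] cong: sum.cong)
  have "bij_betw f {0..<n - 1} (N - {\<xi>})"
  proof (rule bij_betw_subset[OF f])
    have "f ` {0..<n - 1} = f ` ({0..<n} - {n - 1})" using \<open>n > 0\<close> by auto
    also have "\<dots> = f ` {0..<n} - f ` {n - 1}"
      using f \<open>n > 0\<close> by (intro inj_on_image_set_diff) (auto simp: bij_betw_def)
    also have "\<dots> = N - {\<xi>}" using f f_last by (simp add: bij_betw_def)
    finally show "f ` {0..<n - 1} = N - {\<xi>}" .
  qed auto
  hence "mdet (N - {\<xi>}) C = det (mat_delete A (n - 1) (n - 1))"
    by (subst mdet_eq_det_mat)
      (auto simp: A_def mat_delete_def intro!: arg_cong[of _ _ det] eq_matI)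
  also have "\<dots> = adj \<xi> \<xi>"
    using A g_xi \<open>n > 0\<close> by (simp add: adj_def M_def adj_mat_def cofactor_def)
  finally have diag: "adj \<xi> \<xi> = mdet (N - {\<xi>}) C" ..
  have jacobi: "mdet N C dvd adj \<xi> \<xi> * (adj \<xi> \<xi> * adj q p - adj \<xi> p * adj q \<xi>)"
    if "mdet N C \<noteq> 0" "p \<in> N" "q \<in> N" for p q
    using det_dvd_adj_mat_minor[OF A, of "g \<xi>" "g q" "g p"] that assms(2) g
    by (simp add: det_A adj_def M_def)
  show ?thesis
    unfolding marked_adjugate_def using right left diag jacobi by blast
qed

lemma mdet_eq_0_imp_kernel:
  fixes C :: "'n \<Rightarrow> 'n \<Rightarrow> int"
  assumes "finite N" "mdet N C = 0"
  shows "\<exists>c. (\<exists>q\<in>N. c q \<noteq> 0) \<and> (\<forall>p\<in>N. (\<Sum>q\<in>N. C p q * c q) = 0)"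
proof -
  define n where "n = card N"
  obtain f where f: "bij_betw f {0..<n} N" using ex_bij_betw_nat_finite[OF assms(1)] n_def by blast
  define A where "A = mat n n (\<lambda>(i,j). C (f i) (f j))"
  have A: "A \<in> carrier_mat n n" by (simp add: A_def)
  have "det A = 0" using assms(2) mdet_eq_det_mat[OF f, of C] by (simp add: A_def)
  then obtain v where v: "v \<in> carrier_vec n" "v \<noteq> 0\<^sub>v n" "A *\<^sub>v v = 0\<^sub>v n"
    using det_0_iff_vec_prod_zero[OF A] by blast
  define g where "g = inv_into {0..<n} f"
  have g: "g u < n" "f (g u) = u" if "u \<in> N" for u
    using f that by (auto simp: g_def bij_betw_def bij_betw_inv_into_right intro: inv_into_into)
  define c where "c = (\<lambda>u. v $ g u)"
  obtain i where i: "i < n" "v $ i \<noteq> 0" using v(1,2) by (metis eq_vecI carrier_vecD index_zero_vec)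
  have "f i \<in> N" "c (f i) \<noteq> 0"
    using f i by (auto simp: c_def g_def bij_betw_def)
  moreover have "(\<Sum>q\<in>N. C p q * c q) = 0" if p: "p \<in> N" for p
  proof -
    have "(\<Sum>q\<in>N. C p q * c q) = (\<Sum>k = 0..<n. A $$ (g p, k) * v $ k)"
      using f g[OF p] by (auto simp: sum.reindex_bij_betw[OF f, symmetric] A_def c_def g_def
          bij_betw_inv_into_left intro: sum.cong)
    also have "\<dots> = (A *\<^sub>v v) $ g p"
      using A v(1) g[OF p] by (simp add: mult_mat_vec_def scalar_prod_def)
    also have "\<dots> = 0" using v(3) g[OF p] by simp
    finally show ?thesis .
  qed
  ultimately show ?thesis by blast
qed

section \<open>Root coordinates on a diagram with coprime minor\<close>

definition root_coords :: "'n set \<Rightarrow> ('n \<Rightarrow> 'n \<Rightarrow> int) \<Rightarrow> ('n \<Rightarrow> int) \<Rightarrow> ('n \<Rightarrow> int) \<Rightarrow> bool" where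
  "root_coords N C w c \<longleftrightarrow> (\<forall>p\<in>N. w p = (\<Sum>q\<in>N. C p q * c q))"

lemma in_root_lattice_iff_root_coords: "in_root_lattice N C w \<longleftrightarrow> (\<exists>c. root_coords N C w c)"
  by (simp add: in_root_lattice_def root_coords_def)

lemma extensible_imp_coprime_minor:
  assumes "extensible N C \<xi>"
  shows "coprime (mdet N C) (mdet (N - {\<xi>}) C)"
proof (rule coprimeI)
  fix d assume "d dvd mdet N C" "d dvd mdet (N - {\<xi>}) C"
  hence "d dvd Delta N C \<xi>" by (simp add: Delta_def)
  thus "is_unit d" using assms \<open>d dvd mdet N C\<close>
    by (metis coprime_common_divisor coprime_iff_gcd_eq_1 extensible_def)
qed

locale coprime_marked_diagram =
  fixes N :: "'n set" and C :: "'n \<Rightarrow> 'n \<Rightarrow> int" and \<xi> :: 'n and adj :: "'n \<Rightarrow> 'n \<Rightarrow> int"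
  assumes finite_nodes: "finite N" and marked_node: "\<xi> \<in> N"
    and adjugate: "marked_adjugate N C \<xi> adj"
    and mdet_nonzero: "mdet N C \<noteq> 0"
    and coprime_minor: "coprime (mdet N C) (mdet (N - {\<xi>}) C)"

lemma coprime_marked_diagram_exists:
  assumes "finite N" "\<xi> \<in> N" "extensible N C \<xi>"
  shows "\<exists>adj. coprime_marked_diagram N C \<xi> adj"
  using assms marked_adjugate_exists[OF assms(1,2)] extensible_imp_coprime_minor[OF assms(3)]
  by (auto simp: coprime_marked_diagram_def extensible_def)

context coprime_marked_diagram
begin

lemma adj_right_inverse: "p \<in> N \<Longrightarrow> r \<in> N \<Longrightarrow> (\<Sum>q\<in>N. C p q * adj q r) = (if p = r then mdet N C else 0)"
  and adj_left_inverse: "p \<in> N \<Longrightarrow> r \<in> N \<Longrightarrow> (\<Sum>q\<in>N. adj p q * C q r) = (if p = r then mdet N C else 0)"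
  and adj_marked: "adj \<xi> \<xi> = mdet (N - {\<xi>}) C"
  and mdet_dvd_adj_minor: "p \<in> N \<Longrightarrow> q \<in> N \<Longrightarrow>
     mdet N C dvd adj \<xi> \<xi> * (adj \<xi> \<xi> * adj q p - adj \<xi> p * adj q \<xi>)"
  using adjugate mdet_nonzero unfolding marked_adjugate_def by blast+

lemma sum_adj_marked_delta: "(\<Sum>p\<in>N. adj \<xi> p * (if p = \<xi> then z else 0)) = mdet (N - {\<xi>}) C * z"
  using finite_nodes marked_node by (simp add: adj_marked if_distrib cong: if_cong)

lemma mdet_mult_root_coord:
  assumes "root_coords N C v c" "r \<in> N"
  shows "mdet N C * c r = (\<Sum>p\<in>N. adj r p * v p)"
proof -
  have "(\<Sum>p\<in>N. adj r p * v p) = (\<Sum>p\<in>N. \<Sum>q\<in>N. adj r p * C p q * c q)"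
    using assms(1) by (simp add: root_coords_def sum_distrib_left mult.assoc)
  also have "\<dots> = (\<Sum>q\<in>N. (\<Sum>p\<in>N. adj r p * C p q) * c q)"
    by (subst sum.swap) (simp add: sum_distrib_right)
  also have "\<dots> = (\<Sum>q\<in>N. if r = q then mdet N C * c q else 0)"
    using assms(2) by (intro sum.cong) (auto simp: adj_left_inverse)
  also have "\<dots> = mdet N C * c r" using finite_nodes assms(2) by simp
  finally show ?thesis by simp
qed

text \<open>\<open>det X\<close> divides the whole vector \<open>adj v\<close> once it divides its \<open>\<xi>\<close>-entry: by Jacobi's
  divisibility it divides \<open>det X(-1) (adj v)\<^sub>q - adj(q,\<xi>) (adj v)\<^sub>\<xi>\<close>, and \<open>det X(-1)\<close> is a unit
  modulo \<open>det X\<close>. Then \<open>c = adj v / det X\<close> are integral root coordinates.\<close>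
lemma root_coords_exist_if_dvd:
  assumes dvd: "mdet N C dvd (\<Sum>p\<in>N. adj \<xi> p * v p)"
  shows "\<exists>c. root_coords N C v c"
proof -
  define D where "D = mdet N C"
  define D' where "D' = mdet (N - {\<xi>}) C"
  define u where "u = (\<lambda>q. \<Sum>p\<in>N. adj q p * v p)"
  have dvd_u: "D dvd u q" if q: "q \<in> N" for q
  proof -
    have minor: "D dvd D' * adj q p - adj \<xi> p * adj q \<xi>" if p: "p \<in> N" for p
    proof -
      have "D dvd D' * (D' * adj q p - adj \<xi> p * adj q \<xi>)"
        using mdet_dvd_adj_minor[OF p q] by (simp only: D_def D'_def adj_marked)
      thus ?thesis using coprime_minor by (simp only: D_def D'_def coprime_dvd_mult_right_iff)
    qed
    have "D' * u q - adj q \<xi> * u \<xi> = (\<Sum>p\<in>N. (D' * adj q p - adj \<xi> p * adj q \<xi>) * v p)"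
      by (simp add: u_def sum_distrib_left sum_subtractf algebra_simps)
    also have "D dvd \<dots>" using minor by (intro dvd_sum) auto
    finally have "D dvd D' * u q - adj q \<xi> * u \<xi>" .
    moreover have "D dvd adj q \<xi> * u \<xi>" using dvd by (simp add: D_def u_def)
    ultimately have "D dvd (D' * u q - adj q \<xi> * u \<xi>) + adj q \<xi> * u \<xi>" by (rule dvd_add)
    hence "D dvd D' * u q" by simp
    thus ?thesis using coprime_minor by (simp only: D_def D'_def coprime_dvd_mult_right_iff)
  qed
  define c where "c = (\<lambda>q. u q div D)"
  have Dc: "D * c q = u q" if "q \<in> N" for q using dvd_u[OF that] by (simp add: c_def)
  have "v p = (\<Sum>q\<in>N. C p q * c q)" if p: "p \<in> N" for p
  proof -
    have "D * (\<Sum>q\<in>N. C p q * c q) = (\<Sum>q\<in>N. C p q * (D * c q))"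
      by (simp add: sum_distrib_left ac_simps)
    also have "\<dots> = (\<Sum>q\<in>N. C p q * u q)" by (simp add: Dc)
    also have "\<dots> = (\<Sum>r\<in>N. (\<Sum>q\<in>N. C p q * adj q r) * v r)"
      unfolding u_def by (simp add: sum_distrib_left sum_distrib_right mult.assoc) (rule sum.swap)
    also have "\<dots> = (\<Sum>r\<in>N. if p = r then D * v r else 0)"
      using p by (intro sum.cong) (auto simp: adj_right_inverse D_def)
    also have "\<dots> = D * v p" using finite_nodes p by simp
    finally show ?thesis using mdet_nonzero by (simp add: D_def)
  qed
  thus ?thesis by (auto simp: root_coords_def)
qed

lemma root_coords_marked_iff:
  "(\<exists>c. root_coords N C v c \<and> c \<xi> = z) \<longleftrightarrow> mdet N C * z = (\<Sum>p\<in>N. adj \<xi> p * v p)"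
proof
  assume "\<exists>c. root_coords N C v c \<and> c \<xi> = z"
  thus "mdet N C * z = (\<Sum>p\<in>N. adj \<xi> p * v p)" using mdet_mult_root_coord marked_node by blast
next
  assume h: "mdet N C * z = (\<Sum>p\<in>N. adj \<xi> p * v p)"
  hence "mdet N C dvd (\<Sum>p\<in>N. adj \<xi> p * v p)" by (metis dvd_triv_left)
  then obtain c where c: "root_coords N C v c" using root_coords_exist_if_dvd by blast
  have "mdet N C * c \<xi> = mdet N C * z" using mdet_mult_root_coord[OF c marked_node] h by simp
  hence "c \<xi> = z" using mdet_nonzero by simp
  thus "\<exists>c. root_coords N C v c \<and> c \<xi> = z" using c by blast
qed

end

section \<open>Attaching a path\<close>

definition tail_moment :: "(nat \<Rightarrow> int) \<Rightarrow> nat \<Rightarrow> nat \<Rightarrow> int" where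
  "tail_moment w k t = (\<Sum>r\<in>{t<..k}. (int r - int t) * w r)"

lemma tail_moment_recurrence:
  assumes "1 \<le> t" "t \<le> k"
  shows "tail_moment w k (t - 1) + tail_moment w k (Suc t) = 2 * tail_moment w k t + w t"
proof -
  define S where "S = (\<Sum>r\<in>{t<..k}. w r)"
  have "{t - 1<..k} = insert t {t<..k}" using assms by auto
  hence "tail_moment w k (t - 1) = w t + (\<Sum>r\<in>{t<..k}. (int r - int (t - 1)) * w r)"
    unfolding tail_moment_def using assms by simp
  also have "(\<Sum>r\<in>{t<..k}. (int r - int (t - 1)) * w r) = tail_moment w k t + S"
    unfolding tail_moment_def S_def using assms
    by (simp add: sum.distrib[symmetric] algebra_simps of_nat_diff)
  finally have prev: "tail_moment w k (t - 1) = w t + tail_moment w k t + S" by simp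
  have succ: "tail_moment w k (Suc t) = tail_moment w k t - S"
  proof (cases "t < k")
    case True
    have "tail_moment w k t - S = (\<Sum>r\<in>{t<..k}. (int r - int t - 1) * w r)"
      unfolding tail_moment_def S_def by (simp add: sum_subtractf[symmetric] algebra_simps)
    also have "{t<..k} = insert (Suc t) {Suc t<..k}" using True by auto
    also have "(\<Sum>r\<in>insert (Suc t) {Suc t<..k}. (int r - int t - 1) * w r) = tail_moment w k (Suc t)"
      unfolding tail_moment_def by (subst sum.insert) (auto simp: algebra_simps)
    finally show ?thesis by simp
  next
    case False
    thus ?thesis by (simp add: tail_moment_def S_def)
  qed
  show ?thesis using prev succ by simp
qed

text \<open>The solution of \<open>2 c\<^sub>t - c\<^sub>t\<^sub>-\<^sub>1 - c\<^sub>t\<^sub>+\<^sub>1 = w\<^sub>t\<close> (\<open>1 \<le> t \<le> k\<close>) with \<open>c\<^sub>k = s\<close> and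
  \<open>c\<^sub>k\<^sub>+\<^sub>1 = 0\<close>: the root coordinates along a path \<open>1 - \<dots> - k\<close> hanging off a diagram.\<close>
definition path_solution :: "(nat \<Rightarrow> int) \<Rightarrow> nat \<Rightarrow> int \<Rightarrow> nat \<Rightarrow> int" where
  "path_solution w k s t = (int (Suc k) - int t) * s - tail_moment w k t"

lemma path_solution_recurrence:
  assumes "1 \<le> t" "t \<le> k"
  shows "w t = 2 * path_solution w k s t - path_solution w k s (t - 1)
    - path_solution w k s (Suc t)"
  using tail_moment_recurrence[OF assms, of w] assms
  unfolding path_solution_def by (simp add: of_nat_diff algebra_simps)

lemma path_solution_last [simp]: "path_solution w k s k = s" "path_solution w k s (Suc k) = 0"
  by (simp_all add: path_solution_def tail_moment_def)

lemma path_solution_zero [simp]: "path_solution (\<lambda>_. 0) k 0 t = 0"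
  by (simp add: path_solution_def tail_moment_def)

lemma path_solution_unique:
  assumes rec: "\<forall>t\<in>{1..k}. w t = 2 * c t - c (t - 1) - c (Suc t)"
    and last: "c (Suc k) = 0" and t: "t \<le> Suc k"
  shows "c t = path_solution w k (c k) t"
proof -
  have "c (k - i) = path_solution w k (c k) (k - i) \<and>
      c (Suc k - i) = path_solution w k (c k) (Suc k - i)"
    if "i \<le> k" for i
    using that
  proof (induction i)
    case 0 thus ?case by (simp add: last)
  next
    case (Suc i)
    define t where "t = k - i"
    have t: "1 \<le> t" "t \<le> k" using Suc.prems by (auto simp: t_def)
    have e: "k - Suc i = t - 1" "Suc k - Suc i = t" "Suc k - i = Suc t"
      using Suc.prems by (auto simp: t_def)
    have IH: "c t = path_solution w k (c k) t" "c (Suc t) = path_solution w k (c k) (Suc t)"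
      using Suc.IH Suc.prems unfolding t_def by (simp_all add: Suc_diff_le)
    have "c (t - 1) = 2 * c t - c (Suc t) - w t" using rec t by auto
    also have "\<dots> = path_solution w k (c k) (t - 1)"
      using IH path_solution_recurrence[OF t, of w "c k"] by simp
    finally show ?case using IH unfolding e by simp
  qed
  from this[of "k - t"] this[of 0] t show ?thesis
    by (cases "t = Suc k") (auto simp: last)
qed

lemma path_solution_start:
  fixes D D' s :: int
  shows "D * path_solution w m s 0 - D' * path_solution w m s 1 =
     s * (D + int m * (D - D')) - (\<Sum>t\<in>{1..m}. (D' + int t * (D - D')) * w t)"
proof -
  have "{0<..m} = {1..m}" by auto
  hence tm0: "tail_moment w m 0 = (\<Sum>t\<in>{1..m}. int t * w t)" by (simp add: tail_moment_def)
  have tm1: "tail_moment w m 1 = (\<Sum>t\<in>{1..m}. (int t - 1) * w t)"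
  proof (cases "m = 0")
    case False
    hence "{1..m} = insert 1 {1<..m}" by auto
    thus ?thesis by (simp add: tail_moment_def)
  qed (simp add: tail_moment_def)
  have "D * tail_moment w m 0 - D' * tail_moment w m 1 = (\<Sum>t\<in>{1..m}. (D' + int t * (D - D')) * w t)"
    unfolding tm0 tm1 by (simp add: sum_distrib_left sum_subtractf[symmetric] algebra_simps)
  thus ?thesis by (simp add: path_solution_def algebra_simps)
qed

lemma sum_ext_nodes:
  assumes "finite N"
  shows "(\<Sum>q\<in>ext_nodes N m. f q) = (\<Sum>q\<in>N. f (Inl q)) + (\<Sum>t\<in>{1..m}. f (Inr t))"
proof -
  have "(\<Sum>q\<in>ext_nodes N m. f q) = (\<Sum>q\<in>Inl ` N. f q) + (\<Sum>q\<in>Inr ` {1..m}. f q)"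
    unfolding ext_nodes_def using assms by (intro sum.union_disjoint) auto
  also have "\<dots> = (\<Sum>q\<in>N. f (Inl q)) + (\<Sum>t\<in>{1..m}. f (Inr t))"
    by (simp add: sum.reindex)
  finally show ?thesis .
qed

lemma finite_ext_nodes: "finite N \<Longrightarrow> finite (ext_nodes N m)"
  by (simp add: ext_nodes_def)

lemma sum_path_entry:
  assumes t: "t \<in> {1..m}"
  shows "(\<Sum>s\<in>{1..m}. path_entry t s * g s) =
    2 * g t - (if 1 < t then g (t - 1) else 0) - (if t < m then g (Suc t) else 0)"
proof -
  have "(\<Sum>s\<in>{1..m}. path_entry t s * g s) =
        (\<Sum>s\<in>{1..m}. if s = t then 2 * g s else 0)
      - (\<Sum>s\<in>{1..m}. if s = t - 1 then (if 1 < t then g s else 0) else 0)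
      - (\<Sum>s\<in>{1..m}. if s = Suc t then g s else 0)"
    unfolding sum_subtractf[symmetric]
    by (rule sum.cong[OF refl]) (use t in \<open>auto simp: path_entry_def\<close>)
  also have "(\<Sum>s\<in>{1..m}. if s = t - 1 then (if 1 < t then g s else 0) else 0) =
      (if 1 < t then g (t - 1) else 0)"
    by (cases "1 < t") (use t in \<open>auto simp: sum.delta\<close>)
  finally show ?thesis using t by (simp add: sum.delta)
qed

definition path_coord :: "('n + nat \<Rightarrow> int) \<Rightarrow> 'n \<Rightarrow> nat \<Rightarrow> nat \<Rightarrow> int" where
  "path_coord c \<xi> m t = (if t = 0 then c (Inl \<xi>) else if t \<le> m then c (Inr t) else 0)"

lemma ext_mat_row_Inl:
  assumes "finite N" "p \<in> N"
  shows "(\<Sum>q\<in>ext_nodes N m. ext_mat C \<xi> (Inl p) q * c q) =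
     (\<Sum>q\<in>N. C p q * c (Inl q)) - (if p = \<xi> then path_coord c \<xi> m 1 else 0)"
proof -
  have "(\<Sum>t\<in>{1..m}. ext_mat C \<xi> (Inl p) (Inr t) * c (Inr t)) =
        (\<Sum>t\<in>{1..m}. if t = 1 then (if p = \<xi> then - c (Inr t) else 0) else 0)"
    by (rule sum.cong[OF refl]) (auto simp: ext_mat_def)
  also have "\<dots> = - (if p = \<xi> then path_coord c \<xi> m 1 else 0)"
    by (simp add: sum.delta path_coord_def)
  finally show ?thesis using assms by (simp add: sum_ext_nodes ext_mat_def)
qed

lemma ext_mat_row_Inr:
  assumes "finite N" "\<xi> \<in> N" and t: "t \<in> {1..m}"
  shows "(\<Sum>q\<in>ext_nodes N m. ext_mat C \<xi> (Inr t) q * c q) =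
     2 * path_coord c \<xi> m t - path_coord c \<xi> m (t - 1) - path_coord c \<xi> m (Suc t)"
proof -
  have "(\<Sum>q\<in>N. ext_mat C \<xi> (Inr t) (Inl q) * c (Inl q)) =
        (\<Sum>q\<in>N. if q = \<xi> then (if t = 1 then - c (Inl q) else 0) else 0)"
    by (rule sum.cong[OF refl]) (auto simp: ext_mat_def)
  also have "\<dots> = (if t = 1 then - c (Inl \<xi>) else 0)" using assms by (simp add: sum.delta)
  finally have X: "(\<Sum>q\<in>N. ext_mat C \<xi> (Inr t) (Inl q) * c (Inl q)) =
    (if t = 1 then - c (Inl \<xi>) else 0)" .
  have path: "(\<Sum>s\<in>{1..m}. ext_mat C \<xi> (Inr t) (Inr s) * c (Inr s)) =
     2 * c (Inr t) - (if 1 < t then c (Inr (t - 1)) else 0)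
     - (if t < m then c (Inr (Suc t)) else 0)"
    using sum_path_entry[OF t] by (simp add: ext_mat_def)
  show ?thesis using t unfolding sum_ext_nodes[OF assms(1)] X path by (auto simp: path_coord_def)
qed

context coprime_marked_diagram
begin

lemma path_coord_eq_path_solution:
  assumes c: "root_coords (ext_nodes N m) (ext_mat C \<xi>) w c" and t: "t \<le> Suc m"
  shows "path_coord c \<xi> m t = path_solution (\<lambda>t. w (Inr t)) m (c (ext_top \<xi> m)) t"
proof -
  have "\<forall>t\<in>{1..m}. w (Inr t) =
      2 * path_coord c \<xi> m t - path_coord c \<xi> m (t - 1) - path_coord c \<xi> m (Suc t)"
    using c ext_mat_row_Inr[OF finite_nodes marked_node]
    by (auto simp: root_coords_def ext_nodes_def)
  moreover have "path_coord c \<xi> m m = c (ext_top \<xi> m)" "path_coord c \<xi> m (Suc m) = 0"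
    by (simp_all add: path_coord_def ext_top_def)
  ultimately show ?thesis using path_solution_unique[OF _ _ t] by metis
qed

lemma root_coords_ext_restrict:
  assumes "root_coords (ext_nodes N m) (ext_mat C \<xi>) w c"
  shows "root_coords N C (\<lambda>p. w (Inl p) + (if p = \<xi> then path_coord c \<xi> m 1 else 0))
    (\<lambda>q. c (Inl q))"
  using assms ext_mat_row_Inl[OF finite_nodes]
  by (auto simp: root_coords_def ext_nodes_def)

text \<open>The value of this form at \<open>w\<close> is \<open>(det X + m \<Delta>) \<times>\<close> the top root coordinate of \<open>w\<close>, and
  its values at the fundamental weights are the sequence \<open>a\<close>.\<close>
definition ext_form :: "nat \<Rightarrow> ('n + nat \<Rightarrow> int) \<Rightarrow> int" where
  "ext_form m w = (\<Sum>p\<in>N. adj \<xi> p * w (Inl p))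
     + (\<Sum>t\<in>{1..m}. (mdet (N - {\<xi>}) C + int t * Delta N C \<xi>) * w (Inr t))"

lemma root_coords_ext_top:
  assumes c: "root_coords (ext_nodes N m) (ext_mat C \<xi>) w c"
  shows "c (ext_top \<xi> m) * (mdet N C + int m * Delta N C \<xi>) = ext_form m w"
proof -
  let ?s = "c (ext_top \<xi> m)" and ?w = "\<lambda>t. w (Inr t)"
    and ?D = "mdet N C" and ?D' = "mdet (N - {\<xi>}) C"
  have c0: "c (Inl \<xi>) = path_solution ?w m ?s 0"
    and c1: "path_coord c \<xi> m 1 = path_solution ?w m ?s 1"
    using path_coord_eq_path_solution[OF c, of 0] path_coord_eq_path_solution[OF c, of 1]
    by (simp_all add: path_coord_def)
  have "?D * c (Inl \<xi>) =
      (\<Sum>p\<in>N. adj \<xi> p * (w (Inl p) + (if p = \<xi> then path_coord c \<xi> m 1 else 0)))"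
    using mdet_mult_root_coord[OF root_coords_ext_restrict[OF c] marked_node] by simp
  also have "\<dots> = (\<Sum>p\<in>N. adj \<xi> p * w (Inl p)) + ?D' * path_coord c \<xi> m 1"
    by (simp add: distrib_left sum.distrib sum_adj_marked_delta)
  finally have "?D * path_solution ?w m ?s 0 - ?D' * path_solution ?w m ?s 1 =
      (\<Sum>p\<in>N. adj \<xi> p * w (Inl p))"
    unfolding c0 c1 by simp
  moreover have "ext_form m w =
      (\<Sum>p\<in>N. adj \<xi> p * w (Inl p)) + (\<Sum>t\<in>{1..m}. (?D' + int t * (?D - ?D')) * ?w t)"
    by (simp add: ext_form_def Delta_def)
  ultimately show ?thesis
    using path_solution_start[of ?D ?w m ?s ?D'] by (simp add: Delta_def mult.commute)
qed

lemma root_coords_ext_exist: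
  assumes "s * (mdet N C + int m * Delta N C \<xi>) = ext_form m w"
  shows "\<exists>c. root_coords (ext_nodes N m) (ext_mat C \<xi>) w c \<and> c (ext_top \<xi> m) = s"
proof -
  let ?w = "\<lambda>t. w (Inr t)" and ?D = "mdet N C" and ?D' = "mdet (N - {\<xi>}) C"
  define cc where "cc = path_solution ?w m s"
  define v where "v = (\<lambda>p. w (Inl p) + (if p = \<xi> then cc 1 else 0))"
  have "?D * cc 0 = (\<Sum>p\<in>N. adj \<xi> p * w (Inl p)) + ?D' * cc 1"
    using assms path_solution_start[of ?D ?w m s ?D'] by (simp add: cc_def ext_form_def Delta_def)
  also have "\<dots> = (\<Sum>p\<in>N. adj \<xi> p * v p)"
    by (simp add: v_def distrib_left sum.distrib sum_adj_marked_delta)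
  finally obtain cX where cX: "root_coords N C v cX" "cX \<xi> = cc 0"
    using root_coords_marked_iff by blast
  define c where "c = case_sum cX cc"
  have path: "path_coord c \<xi> m t = cc t" if "t \<le> Suc m" for t
    using that cX(2) by (auto simp: path_coord_def c_def cc_def le_Suc_eq)
  have "root_coords (ext_nodes N m) (ext_mat C \<xi>) w c"
    unfolding root_coords_def
  proof
    fix u assume "u \<in> ext_nodes N m"
    then consider p where "u = Inl p" "p \<in> N" | t where "u = Inr t" "t \<in> {1..m}"
      by (auto simp: ext_nodes_def)
    thus "w u = (\<Sum>q\<in>ext_nodes N m. ext_mat C \<xi> u q * c q)"
    proof cases
      case (1 p)
      have "path_coord c \<xi> m 1 = cc 1" by (rule path) simp
      hence "(\<Sum>q\<in>ext_nodes N m. ext_mat C \<xi> u q * c q) =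
          (\<Sum>q\<in>N. C p q * cX q) - (if p = \<xi> then cc 1 else 0)"
        unfolding 1(1) ext_mat_row_Inl[OF finite_nodes 1(2)] by (simp add: c_def)
      moreover have "v p = (\<Sum>q\<in>N. C p q * cX q)" using cX(1) 1(2) unfolding root_coords_def by blast
      ultimately show ?thesis unfolding 1(1) v_def by linarith
    next
      case (2 t)
      hence "t - 1 \<le> Suc m" "t \<le> Suc m" "Suc t \<le> Suc m" by auto
      with 2 show ?thesis
        using path path_solution_recurrence[of t m ?w s]
        by (simp add: ext_mat_row_Inr[OF finite_nodes marked_node] cc_def)
    qed
  qed
  moreover have "c (ext_top \<xi> m) = s"
    using cX(2) by (simp add: c_def cc_def ext_top_def)
  ultimately show ?thesis by blast
qed

lemma root_coords_ext_iff:
  "(\<exists>c. root_coords (ext_nodes N m) (ext_mat C \<xi>) w c \<and> c (ext_top \<xi> m) = s) \<longleftrightarrow>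
     s * (mdet N C + int m * Delta N C \<xi>) = ext_form m w"
  using root_coords_ext_top root_coords_ext_exist by blast

lemma root_coords_ext_kernel:
  assumes c: "root_coords (ext_nodes N m) (ext_mat C \<xi>) (\<lambda>_. 0) c"
    and nonzero: "mdet N C + int m * Delta N C \<xi> \<noteq> 0" and u: "u \<in> ext_nodes N m"
  shows "c u = 0"
proof -
  have "c (ext_top \<xi> m) = 0"
    using root_coords_ext_top[OF c] nonzero by (simp add: ext_form_def)
  hence path: "path_coord c \<xi> m t = 0" if "t \<le> Suc m" for t
    using path_coord_eq_path_solution[OF c that] by simp
  have "path_coord c \<xi> m 1 = 0" by (rule path) simp
  hence restrict: "root_coords N C (\<lambda>_. 0) (\<lambda>q. c (Inl q))"
    using root_coords_ext_restrict[OF c] unfolding \<open>path_coord c \<xi> m 1 = 0\<close> by simp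
  have "mdet N C * c (Inl p) = 0" if "p \<in> N" for p
    using mdet_mult_root_coord[OF restrict that] by simp
  moreover have "c (Inr t) = 0" if "t \<in> {1..m}" for t
    using path[of t] that by (simp add: path_coord_def)
  ultimately show ?thesis using u mdet_nonzero by (auto simp: ext_nodes_def)
qed

lemma mdet_ext_nonzero:
  assumes "mdet N C + int m * Delta N C \<xi> \<noteq> 0"
  shows "mdet (ext_nodes N m) (ext_mat C \<xi>) \<noteq> 0"
proof
  assume "mdet (ext_nodes N m) (ext_mat C \<xi>) = 0"
  then obtain c where "\<exists>u\<in>ext_nodes N m. c u \<noteq> 0"
    and "\<forall>p\<in>ext_nodes N m. (\<Sum>q\<in>ext_nodes N m. ext_mat C \<xi> p q * c q) = 0"
    using mdet_eq_0_imp_kernel[OF finite_ext_nodes[OF finite_nodes]] by blast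
  moreover from this(2) have "root_coords (ext_nodes N m) (ext_mat C \<xi>) (\<lambda>_. 0) c"
    unfolding root_coords_def by auto
  ultimately show False using root_coords_ext_kernel assms by blast
qed

end

section \<open>The sequence \<open>a\<close>\<close>

lemma coprime_add_mult_diff_iff:
  fixes a b m :: int
  shows "coprime (a + m * (a - b)) (b + m * (a - b)) \<longleftrightarrow> coprime a b"
proof
  assume cop: "coprime (a + m * (a - b)) (b + m * (a - b))"
  show "coprime a b"
  proof (rule coprimeI)
    fix d assume "d dvd a" "d dvd b"
    hence "d dvd a + m * (a - b)" "d dvd b + m * (a - b)" by simp_all
    thus "is_unit d" using cop by (meson coprime_common_divisor)
  qed
next
  assume cop: "coprime a b"
  show "coprime (a + m * (a - b)) (b + m * (a - b))"
  proof (rule coprimeI)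
    fix d assume d1: "d dvd a + m * (a - b)" and d2: "d dvd b + m * (a - b)"
    have "d dvd (a + m * (a - b)) - (b + m * (a - b))" using d1 d2 by (rule dvd_diff)
    hence "d dvd m * (a - b)" by simp
    hence "d dvd a" "d dvd b" using d1 d2 by (simp_all add: dvd_add_left_iff)
    thus "is_unit d" using cop by (meson coprime_common_divisor)
  qed
qed

lemma abs_add_mult_gt:
  fixes \<alpha> \<beta> b :: int
  assumes "\<beta> \<noteq> 0" "int k > \<bar>\<alpha>\<bar> + \<bar>b\<bar>"
  shows "\<bar>\<alpha> + int k * \<beta>\<bar> > \<bar>b\<bar>"
proof -
  have "int k * 1 \<le> int k * \<bar>\<beta>\<bar>" using assms(1) by (intro mult_left_mono) auto
  hence "\<bar>int k * \<beta>\<bar> \<ge> int k" by (simp add: abs_mult)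
  thus ?thesis using assms(2) by linarith
qed

context coprime_marked_diagram
begin

definition a_explicit :: "('n \<Rightarrow> nat) \<Rightarrow> nat \<Rightarrow> int" where
  "a_explicit \<epsilon> j = (if j = 0 then 0 else if j \<le> card N then adj \<xi> (inv_into N \<epsilon> j)
     else mdet (N - {\<xi>}) C + int (j - card N) * Delta N C \<xi>)"

lemma ext_form_fund_weight:
  assumes num: "numbering N \<xi> \<epsilon>" and u: "u \<in> ext_nodes N m"
  shows "ext_form m (fund_weight u) = a_explicit \<epsilon> (ext_num \<epsilon> (card N) u)"
proof (cases u)
  case (Inl p)
  hence p: "p \<in> N" using u by (auto simp: ext_nodes_def)
  have \<epsilon>: "bij_betw \<epsilon> N {1..card N}" using num by (simp add: numbering_def)
  hence "\<epsilon> p \<in> {1..card N}" "inv_into N \<epsilon> (\<epsilon> p) = p"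
    using p by (auto simp: bij_betw_def)
  thus ?thesis
    using finite_nodes p by (simp add: Inl ext_num_def a_explicit_def ext_form_def fund_weight_def
        if_distrib cong: if_cong)
next
  case (Inr t)
  hence "t \<in> {1..m}" using u by (auto simp: ext_nodes_def)
  thus ?thesis
    using finite_nodes by (simp add: Inr ext_num_def a_explicit_def ext_form_def fund_weight_def
        if_distrib cong: if_cong)
qed

lemma ext_form_top:
  "ext_form m (fund_weight (ext_top \<xi> m)) = mdet (N - {\<xi>}) C + int m * Delta N C \<xi>"
  using finite_nodes marked_node
  by (simp add: ext_form_def fund_weight_def ext_top_def adj_marked if_distrib cong: if_cong)

lemma ext_form_a_prop_weight:
  assumes "numbering N \<xi> \<epsilon>" "p \<in> ext_nodes N m"
  shows "ext_form m (\<lambda>q. - Delta N C \<xi> * fund_weight p q - b * fund_weight (ext_top \<xi> m) q) =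
    - Delta N C \<xi> * a_explicit \<epsilon> (ext_num \<epsilon> (card N) p)
    - b * (mdet (N - {\<xi>}) C + int m * Delta N C \<xi>)"
proof -
  have linear: "ext_form m (\<lambda>q. \<alpha> * f q + \<beta> * g q) = \<alpha> * ext_form m f + \<beta> * ext_form m g"
    for \<alpha> \<beta> f g
    by (simp add: ext_form_def sum.distrib sum_distrib_left algebra_simps)
  show ?thesis
    using linear[of "- Delta N C \<xi>" "fund_weight p" "- b" "fund_weight (ext_top \<xi> m)"]
    by (simp add: ext_form_fund_weight[OF assms] ext_form_top)
qed

lemma a_prop_a_explicit:
  assumes "numbering N \<xi> \<epsilon>"
  shows "a_prop N C \<xi> \<epsilon> (a_explicit \<epsilon>)"
  unfolding a_prop_def
proof (intro allI impI ballI)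
  fix m p assume p: "p \<in> ext_nodes N m"
  let ?a = "a_explicit \<epsilon> (ext_num \<epsilon> (card N) p)"
  let ?w = "\<lambda>q. - Delta N C \<xi> * fund_weight p q - ?a * fund_weight (ext_top \<xi> m) q"
  have "(- ?a) * (mdet N C + int m * Delta N C \<xi>) = ext_form m ?w"
    unfolding ext_form_a_prop_weight[OF assms p] by (simp add: Delta_def algebra_simps)
  thus "in_root_lattice (ext_nodes N m) (ext_mat C \<xi>) ?w"
    using root_coords_ext_exist in_root_lattice_iff_root_coords by blast
qed

lemma a_prop_dvd_diff:
  assumes a: "a_prop N C \<xi> \<epsilon> a" and num: "numbering N \<xi> \<epsilon>"
    and j: "1 \<le> j" "j \<le> card N + m" and nonzero: "mdet N C + int m * Delta N C \<xi> \<noteq> 0"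
  shows "mdet N C + int m * Delta N C \<xi> dvd a_explicit \<epsilon> j - a j"
proof -
  let ?D = "mdet N C" and ?D' = "mdet (N - {\<xi>}) C" and ?\<Delta> = "Delta N C \<xi>"
  obtain p where p: "p \<in> ext_nodes N m" "ext_num \<epsilon> (card N) p = j"
  proof (cases "j \<le> card N")
    case True
    hence "j \<in> {1..card N}" using j by auto
    hence "inv_into N \<epsilon> j \<in> N" "\<epsilon> (inv_into N \<epsilon> j) = j"
      using num by (auto simp: numbering_def bij_betw_def intro: inv_into_into f_inv_into_f)
    thus ?thesis using that[of "Inl (inv_into N \<epsilon> j)"] by (simp add: ext_nodes_def ext_num_def)
  next
    case False
    hence "j - card N \<in> {1..m}" using j by auto
    hence "Inr (j - card N) \<in> ext_nodes N m" by (simp add: ext_nodes_def)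
    thus ?thesis using that False by (simp add: ext_num_def)
  qed
  let ?w = "\<lambda>q. - ?\<Delta> * fund_weight p q - a j * fund_weight (ext_top \<xi> m) q"
  have "in_root_lattice (ext_nodes N m) (ext_mat C \<xi>) ?w"
    using a mdet_ext_nonzero[OF nonzero] p unfolding a_prop_def by metis
  then obtain c where "root_coords (ext_nodes N m) (ext_mat C \<xi>) ?w c"
    by (auto simp: in_root_lattice_iff_root_coords)
  from root_coords_ext_top[OF this] have
    "c (ext_top \<xi> m) * (?D + int m * ?\<Delta>) = - ?\<Delta> * a_explicit \<epsilon> j - a j * (?D' + int m * ?\<Delta>)"
    unfolding ext_form_a_prop_weight[OF num p(1)] p(2) .
  hence "(a_explicit \<epsilon> j - a j) * (?D' + int m * ?\<Delta>) =
      (?D + int m * ?\<Delta>) * (c (ext_top \<xi> m) + a_explicit \<epsilon> j)"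
    by (simp add: Delta_def algebra_simps)
  hence "?D + int m * ?\<Delta> dvd (a_explicit \<epsilon> j - a j) * (?D' + int m * ?\<Delta>)" by (metis dvdI)
  moreover have "coprime (?D + int m * ?\<Delta>) (?D' + int m * ?\<Delta>)"
    using coprime_add_mult_diff_iff[of ?D "int m" ?D'] coprime_minor by (simp add: Delta_def)
  ultimately show ?thesis by (simp add: coprime_dvd_mult_left_iff)
qed

lemma a_prop_eq_a_explicit:
  assumes a: "a_prop N C \<xi> \<epsilon> a" "a 0 = 0" and num: "numbering N \<xi> \<epsilon>"
    and Delta: "Delta N C \<xi> \<noteq> 0"
  shows "a = a_explicit \<epsilon>"
proof
  fix j
  show "a j = a_explicit \<epsilon> j"
  proof (cases "j = 0")
    case False
    define b where "b = a_explicit \<epsilon> j - a j"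
    define m where "m = j + nat \<bar>mdet N C\<bar> + nat \<bar>b\<bar> + 1"
    have big: "\<bar>mdet N C + int m * Delta N C \<xi>\<bar> > \<bar>b\<bar>"
      by (rule abs_add_mult_gt[OF Delta]) (simp add: m_def)
    have "mdet N C + int m * Delta N C \<xi> dvd b"
      unfolding b_def using False big by (intro a_prop_dvd_diff[OF a(1) num]) (auto simp: m_def)
    hence "b = 0" using big by (metis dvd_imp_le_int not_le)
    thus ?thesis by (simp add: b_def)
  qed (simp add: a(2) a_explicit_def)
qed

end

lemma a_seq_eq_a_explicit:
  assumes "coprime_marked_diagram N C \<xi> adj" "numbering N \<xi> \<epsilon>" "Delta N C \<xi> \<noteq> 0"
  shows "a_seq N C \<xi> \<epsilon> = coprime_marked_diagram.a_explicit N C \<xi> adj \<epsilon>"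
proof -
  interpret coprime_marked_diagram N C \<xi> adj by fact
  show ?thesis
    unfolding a_seq_def using assms(2,3) a_prop_a_explicit a_prop_eq_a_explicit
    by (intro the_equality) (auto simp: a_explicit_def)
qed

section \<open>Gluing along an edge\<close>

lemma Z_nodes_eq: "Z_nodes N1 N2 k = Inl ` ext_nodes N1 k \<union> Inr ` N2"
  by (simp add: Z_nodes_def ext_nodes_def)

lemma sum_Z_nodes:
  assumes "finite N1" "finite N2"
  shows "(\<Sum>q\<in>Z_nodes N1 N2 k. f q) = (\<Sum>u\<in>ext_nodes N1 k. f (Inl u)) + (\<Sum>b\<in>N2. f (Inr b))"
proof -
  have "(\<Sum>q\<in>Z_nodes N1 N2 k. f q) = (\<Sum>q\<in>Inl ` ext_nodes N1 k. f q) + (\<Sum>q\<in>Inr ` N2. f q)"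
    unfolding Z_nodes_eq using assms finite_ext_nodes[OF assms(1)]
    by (intro sum.union_disjoint) auto
  also have "\<dots> = (\<Sum>u\<in>ext_nodes N1 k. f (Inl u)) + (\<Sum>b\<in>N2. f (Inr b))"
    by (simp add: sum.reindex)
  finally show ?thesis .
qed

lemma Z_mat_simps [simp]:
  "Z_mat C1 \<xi>1 C2 \<xi>2 k (Inl u) (Inl v) = ext_mat C1 \<xi>1 u v"
  "Z_mat C1 \<xi>1 C2 \<xi>2 k (Inr p) (Inr q) = C2 p q"
  "Z_mat C1 \<xi>1 C2 \<xi>2 k (Inl u) (Inr q) = (if u = Inr k \<and> q = \<xi>2 then -1 else 0)"
  "Z_mat C1 \<xi>1 C2 \<xi>2 k (Inr p) (Inl v) = (if v = Inr k \<and> p = \<xi>2 then -1 else 0)"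
  by (cases u; cases v; auto simp: Z_mat_def)+

lemma Z_mat_row_Inl:
  assumes "finite N1" "finite N2" "\<xi>2 \<in> N2"
  shows "(\<Sum>q\<in>Z_nodes N1 N2 k. Z_mat C1 \<xi>1 C2 \<xi>2 k (Inl u) q * c q) =
    (\<Sum>v\<in>ext_nodes N1 k. ext_mat C1 \<xi>1 u v * c (Inl v)) - (if u = Inr k then c (Inr \<xi>2) else 0)"
proof -
  have "(\<Sum>b\<in>N2. Z_mat C1 \<xi>1 C2 \<xi>2 k (Inl u) (Inr b) * c (Inr b)) =
        (\<Sum>b\<in>N2. if b = \<xi>2 then (if u = Inr k then - c (Inr b) else 0) else 0)"
    by (rule sum.cong[OF refl]) auto
  also have "\<dots> = - (if u = Inr k then c (Inr \<xi>2) else 0)" using assms by (simp add: sum.delta)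
  finally show ?thesis unfolding sum_Z_nodes[OF assms(1,2)] by simp
qed

lemma Z_mat_row_Inr:
  assumes "finite N1" "finite N2" "1 \<le> k"
  shows "(\<Sum>q\<in>Z_nodes N1 N2 k. Z_mat C1 \<xi>1 C2 \<xi>2 k (Inr b) q * c q) =
    (\<Sum>b'\<in>N2. C2 b b' * c (Inr b')) - (if b = \<xi>2 then c (Inl (Inr k)) else 0)"
proof -
  have "(\<Sum>v\<in>ext_nodes N1 k. Z_mat C1 \<xi>1 C2 \<xi>2 k (Inr b) (Inl v) * c (Inl v)) =
        (\<Sum>v\<in>ext_nodes N1 k. if v = Inr k then (if b = \<xi>2 then - c (Inl v) else 0) else 0)"
    by (rule sum.cong[OF refl]) auto
  also have "\<dots> = - (if b = \<xi>2 then c (Inl (Inr k)) else 0)"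
    using finite_ext_nodes[OF assms(1)] assms(3) by (simp add: sum.delta ext_nodes_def)
  finally show ?thesis unfolding sum_Z_nodes[OF assms(1,2)] by simp
qed

text \<open>\<open>Z\<^sub>k\<close> is \<open>X\<^sub>1(k)\<close> and \<open>X\<^sub>2\<close> joined by the edge \<open>k - \<xi>\<^sub>2\<close>: each half sees the root coordinate
  of the other end of that edge as a correction of its weight.\<close>
lemma root_coords_Z_iff:
  assumes "finite N1" "finite N2" "\<xi>2 \<in> N2" "1 \<le> k"
  shows "root_coords (Z_nodes N1 N2 k) (Z_mat C1 \<xi>1 C2 \<xi>2 k) w c \<longleftrightarrow>
    root_coords (ext_nodes N1 k) (ext_mat C1 \<xi>1)
      (\<lambda>u. w (Inl u) + (if u = Inr k then c (Inr \<xi>2) else 0)) (\<lambda>u. c (Inl u)) \<and>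
    root_coords N2 C2 (\<lambda>b. w (Inr b) + (if b = \<xi>2 then c (Inl (Inr k)) else 0)) (\<lambda>b. c (Inr b))"
proof -
  have L: "w (Inl u) = (\<Sum>q\<in>Z_nodes N1 N2 k. Z_mat C1 \<xi>1 C2 \<xi>2 k (Inl u) q * c q) \<longleftrightarrow>
      w (Inl u) + (if u = Inr k then c (Inr \<xi>2) else 0) =
        (\<Sum>v\<in>ext_nodes N1 k. ext_mat C1 \<xi>1 u v * c (Inl v))" for u
    unfolding Z_mat_row_Inl[OF assms(1-3)] by auto
  have R: "w (Inr b) = (\<Sum>q\<in>Z_nodes N1 N2 k. Z_mat C1 \<xi>1 C2 \<xi>2 k (Inr b) q * c q) \<longleftrightarrow>
      w (Inr b) + (if b = \<xi>2 then c (Inl (Inr k)) else 0) = (\<Sum>b'\<in>N2. C2 b b' * c (Inr b'))" for b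
    unfolding Z_mat_row_Inr[OF assms(1,2,4)] by auto
  have split: "(\<forall>v\<in>Z_nodes N1 N2 k. P v) \<longleftrightarrow> (\<forall>u\<in>ext_nodes N1 k. P (Inl u)) \<and> (\<forall>b\<in>N2. P (Inr b))"
    for P
    unfolding Z_nodes_eq by blast
  show ?thesis unfolding root_coords_def split L R ..
qed

text \<open>The modulus is the determinant of the system; for the converse, coprimality of \<open>a - a'\<close> and
  \<open>b - b'\<close> lets one divide out \<open>a - a'\<close>.\<close>
lemma linear_system_solvable_iff:
  fixes a a' b b' A B :: int
  assumes cop: "coprime (a - a') (b - b')" and "a \<noteq> a'"
  shows "(\<exists>s u. s * a = A + a' * u \<and> b * u = B + b' * s) \<longleftrightarrow>
    a * b - a' * b' dvd (b - b') * A - (a - a') * B"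
proof
  assume "\<exists>s u. s * a = A + a' * u \<and> b * u = B + b' * s"
  then obtain s u where "s * a = A + a' * u" "b * u = B + b' * s" by blast
  hence A: "A = s * a - a' * u" and B: "B = b * u - b' * s" by simp_all
  have "(b - b') * A - (a - a') * B = (a * b - a' * b') * (s - u)"
    unfolding A B by (simp add: algebra_simps)
  thus "a * b - a' * b' dvd (b - b') * A - (a - a') * B" by simp
next
  assume "a * b - a' * b' dvd (b - b') * A - (a - a') * B"
  then obtain g where g: "(b - b') * A - (a - a') * B = (a * b - a' * b') * g" by (elim dvdE)
  have "(b - b') * (A - a' * g) = (a - a') * (B + b * g)"
    using g by (simp add: algebra_simps)
  hence "a - a' dvd (b - b') * (A - a' * g)" by simp
  hence "a - a' dvd A - a' * g" using cop by (simp add: coprime_dvd_mult_right_iff coprime_commute)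
  then obtain s where s: "A - a' * g = (a - a') * s" by (elim dvdE)
  have "(a - a') * ((b - b') * s) = (a - a') * (B + b * g)"
    using \<open>(b - b') * (A - a' * g) = _\<close> s by (simp add: algebra_simps)
  hence s2: "(b - b') * s = B + b * g" using \<open>a \<noteq> a'\<close> by simp
  have "s * a = A + a' * (s - g)" "b * (s - g) = B + b' * s"
    using s s2 by (simp_all add: algebra_simps)
  thus "\<exists>s u. s * a = A + a' * u \<and> b * u = B + b' * s" by blast
qed

lemma (in coprime_marked_diagram) ext_form_shift:
  assumes "1 \<le> k"
  shows "ext_form k (\<lambda>u. f u + (if u = Inr k then z else 0)) =
     ext_form k f + (mdet (N - {\<xi>}) C + int k * Delta N C \<xi>) * z"
proof -
  let ?e = "\<lambda>t. mdet (N - {\<xi>}) C + int t * Delta N C \<xi>"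
  have "(\<Sum>t\<in>{1..k}. ?e t * (f (Inr t) + (if t = k then z else 0))) =
      (\<Sum>t\<in>{1..k}. ?e t * f (Inr t)) + (\<Sum>t\<in>{1..k}. if t = k then ?e t * z else 0)"
    by (subst sum.distrib[symmetric]) (rule sum.cong, auto simp: algebra_simps)
  also have "(\<Sum>t\<in>{1..k}. if t = k then ?e t * z else 0) = ?e k * z" using assms by simp
  finally show ?thesis by (simp add: ext_form_def)
qed

locale coprime_marked_pair =
  X1: coprime_marked_diagram N1 C1 \<xi>1 adj1 + X2: coprime_marked_diagram N2 C2 \<xi>2 adj2
  for N1 :: "'a set" and C1 \<xi>1 adj1 and N2 :: "'b set" and C2 \<xi>2 adj2
begin

lemma Z_root_lattice_iff:
  assumes k: "1 \<le> k"
  shows "in_root_lattice (Z_nodes N1 N2 k) (Z_mat C1 \<xi>1 C2 \<xi>2 k) w \<longleftrightarrow>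
    (\<exists>s u. s * (mdet N1 C1 + int k * Delta N1 C1 \<xi>1) =
        X1.ext_form k (\<lambda>v. w (Inl v)) + (mdet (N1 - {\<xi>1}) C1 + int k * Delta N1 C1 \<xi>1) * u
      \<and> mdet N2 C2 * u = (\<Sum>b\<in>N2. adj2 \<xi>2 b * w (Inr b)) + mdet (N2 - {\<xi>2}) C2 * s)"
    (is "_ \<longleftrightarrow> ?rhs")
proof -
  let ?w1 = "\<lambda>u v. w (Inl v) + (if v = Inr k then u else 0)"
  let ?w2 = "\<lambda>s b. w (Inr b) + (if b = \<xi>2 then s else 0)"
  have top: "ext_top \<xi>1 k = Inr k" using k by (simp add: ext_top_def)
  have "in_root_lattice (Z_nodes N1 N2 k) (Z_mat C1 \<xi>1 C2 \<xi>2 k) w \<longleftrightarrow>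
      (\<exists>c1 c2. root_coords (ext_nodes N1 k) (ext_mat C1 \<xi>1) (?w1 (c2 \<xi>2)) c1 \<and>
        root_coords N2 C2 (?w2 (c1 (ext_top \<xi>1 k))) c2)"
    unfolding in_root_lattice_iff_root_coords
      root_coords_Z_iff[OF X1.finite_nodes X2.finite_nodes X2.marked_node k] top
  proof
    assume "\<exists>c1 c2. root_coords (ext_nodes N1 k) (ext_mat C1 \<xi>1) (?w1 (c2 \<xi>2)) c1 \<and>
        root_coords N2 C2 (?w2 (c1 (Inr k))) c2"
    then obtain c1 c2 where "root_coords (ext_nodes N1 k) (ext_mat C1 \<xi>1) (?w1 (c2 \<xi>2)) c1"
        "root_coords N2 C2 (?w2 (c1 (Inr k))) c2" by blast
    thus "\<exists>c. root_coords (ext_nodes N1 k) (ext_mat C1 \<xi>1) (?w1 (c (Inr \<xi>2))) (\<lambda>u. c (Inl u)) \<and>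
        root_coords N2 C2 (?w2 (c (Inl (Inr k)))) (\<lambda>b. c (Inr b))"
      by (intro exI[of _ "case_sum c1 c2"]) (simp cong: if_cong)
  qed (elim exE conjE, intro exI conjI, assumption+)
  also have "\<dots> \<longleftrightarrow> (\<exists>s u.
      (\<exists>c1. root_coords (ext_nodes N1 k) (ext_mat C1 \<xi>1) (?w1 u) c1 \<and> c1 (ext_top \<xi>1 k) = s) \<and>
      (\<exists>c2. root_coords N2 C2 (?w2 s) c2 \<and> c2 \<xi>2 = u))"
    by blast
  also have "\<dots> \<longleftrightarrow> (\<exists>s u. s * (mdet N1 C1 + int k * Delta N1 C1 \<xi>1) = X1.ext_form k (?w1 u)
       \<and> mdet N2 C2 * u = (\<Sum>b\<in>N2. adj2 \<xi>2 b * ?w2 s b))"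
    unfolding X1.root_coords_ext_iff X2.root_coords_marked_iff ..
  also have "\<dots> \<longleftrightarrow> ?rhs"
  proof -
    have "(\<Sum>b\<in>N2. adj2 \<xi>2 b * ?w2 s b) =
        (\<Sum>b\<in>N2. adj2 \<xi>2 b * w (Inr b)) + mdet (N2 - {\<xi>2}) C2 * s" for s
      by (simp add: distrib_left sum.distrib X2.sum_adj_marked_delta)
    thus ?thesis by (simp only: X1.ext_form_shift[OF k])
  qed
  finally show ?thesis .
qed

text \<open>Expanding along the edge \<open>k - \<xi>\<^sub>2\<close> and using \<open>det X(m) = det X + m \<Delta>\<close> shows that this is
  \<open>det Z\<^sub>k\<close>; the proof only needs it as the modulus of the gluing system.\<close>
definition Z_det :: "nat \<Rightarrow> int" where
  "Z_det k = (mdet N1 C1 + int k * Delta N1 C1 \<xi>1) * mdet N2 C2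
     - (mdet (N1 - {\<xi>1}) C1 + int k * Delta N1 C1 \<xi>1) * mdet (N2 - {\<xi>2}) C2"

lemma Z_root_lattice_iff_dvd:
  assumes k: "1 \<le> k" and cop: "coprime (Delta N1 C1 \<xi>1) (Delta N2 C2 \<xi>2)"
    and Delta1: "Delta N1 C1 \<xi>1 \<noteq> 0"
  shows "in_root_lattice (Z_nodes N1 N2 k) (Z_mat C1 \<xi>1 C2 \<xi>2 k) w \<longleftrightarrow>
    Z_det k dvd Delta N2 C2 \<xi>2 * X1.ext_form k (\<lambda>v. w (Inl v))
      - Delta N1 C1 \<xi>1 * (\<Sum>b\<in>N2. adj2 \<xi>2 b * w (Inr b))"
proof -
  let ?a = "mdet N1 C1 + int k * Delta N1 C1 \<xi>1"
    and ?a' = "mdet (N1 - {\<xi>1}) C1 + int k * Delta N1 C1 \<xi>1"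
  have "?a - ?a' = Delta N1 C1 \<xi>1" "mdet N2 C2 - mdet (N2 - {\<xi>2}) C2 = Delta N2 C2 \<xi>2" "?a \<noteq> ?a'"
    using Delta1 by (simp_all add: Delta_def)
  from linear_system_solvable_iff[of ?a ?a' "mdet N2 C2" "mdet (N2 - {\<xi>2}) C2",
      unfolded this(1,2), OF cop this(3)]
  show ?thesis unfolding Z_root_lattice_iff[OF k] Z_det_def .
qed

lemma Z_det_eq: "Z_det k = (mdet N1 C1 * mdet N2 C2 - mdet (N1 - {\<xi>1}) C1 * mdet (N2 - {\<xi>2}) C2)
    + int k * (Delta N1 C1 \<xi>1 * Delta N2 C2 \<xi>2)"
  by (simp add: Z_det_def Delta_def algebra_simps)

end

section \<open>The number of boxes\<close>

lemma H1_support: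
  assumes "x \<in> H1" "x i \<noteq> 0"
  shows "1 \<le> i \<and> i \<le> seq_len x"
proof -
  have "finite {i. x i \<noteq> 0}" "x 0 = 0" using assms(1) by (auto simp: H1_def)
  hence "i \<le> Max (insert 0 {i. x i \<noteq> 0})" using assms(2) by (intro Max_ge) auto
  moreover have "i \<noteq> 0" using \<open>x 0 = 0\<close> assms(2) by (cases "i = 0") auto
  ultimately show ?thesis by (simp add: seq_len_def)
qed

lemma sum_H1_eq_sum_atLeastAtMost:
  assumes "x \<in> H1" "seq_len x \<le> n"
  shows "(\<Sum>i\<in>{i. x i \<noteq> 0}. x i * a i) = (\<Sum>i\<in>{1..n}. x i * a i)"
proof (rule sum.mono_neutral_left)
  show "{i. x i \<noteq> 0} \<subseteq> {1..n}" using assms H1_support[OF assms(1)] by fastforce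
qed auto

lemma sum_atLeastAtMost_add_split:
  "(\<Sum>i\<in>{1..a + b :: nat}. f i) = (\<Sum>i\<in>{1..a}. f i) + (\<Sum>t\<in>{1..b}. f (a + t))"
  by (induction b) (simp_all add: add.assoc)

lemma sum_numbering:
  assumes "numbering N \<xi> \<epsilon>"
  shows "(\<Sum>i\<in>{1..card N}. g i) = (\<Sum>p\<in>N. g (\<epsilon> p))"
  using assms unfolding numbering_def by (metis sum.reindex_bij_betw)

lemma gamma_k_Inl_Inl:
  assumes "numbering N1 \<xi>1 \<epsilon>1" "p \<in> N1" "y \<in> H1" "seq_len y \<le> card N2 + k"
  shows "gamma_k \<epsilon>1 (card N1) \<epsilon>2 (card N2) x y k (Inl (Inl p)) = x (\<epsilon>1 p)"
proof -
  have "\<epsilon>1 p \<le> card N1" using assms(1,2) by (auto simp: numbering_def bij_betw_def)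
  hence "y (card N1 + card N2 + k + 1 - \<epsilon>1 p) = 0"
    using H1_support[OF assms(3)] assms(4) by fastforce
  thus ?thesis by (simp add: gamma_k_def Z_num_def Z_numbar_def)
qed

lemma gamma_k_Inr:
  assumes "numbering N2 \<xi>2 \<epsilon>2" "b \<in> N2" "x \<in> H1" "seq_len x \<le> card N1 + k"
  shows "gamma_k \<epsilon>1 (card N1) \<epsilon>2 (card N2) x y k (Inr b) = y (\<epsilon>2 b)"
proof -
  have "\<epsilon>2 b \<le> card N2" using assms(1,2) by (auto simp: numbering_def bij_betw_def)
  hence "x (card N1 + card N2 + k + 1 - \<epsilon>2 b) = 0"
    using H1_support[OF assms(3)] assms(4) by fastforce
  thus ?thesis by (simp add: gamma_k_def Z_num_def Z_numbar_def)
qed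

lemma gamma_k_path: "gamma_k \<epsilon>1 d1 \<epsilon>2 d2 x y k (Inl (Inr t)) = x (d1 + t) + y (d2 + k + 1 - t)"
  by (simp add: gamma_k_def Z_num_def Z_numbar_def)

context coprime_marked_diagram
begin

lemma sum_a_explicit:
  assumes num: "numbering N \<xi> \<epsilon>" and x: "x \<in> H1" "seq_len x \<le> card N + k"
  shows "(\<Sum>i\<in>{i. x i \<noteq> 0}. x i * a_explicit \<epsilon> i) =
    (\<Sum>p\<in>N. adj \<xi> p * x (\<epsilon> p))
    + (\<Sum>t\<in>{1..k}. (mdet (N - {\<xi>}) C + int t * Delta N C \<xi>) * x (card N + t))"
proof -
  have \<epsilon>: "\<epsilon> p \<in> {1..card N}" "inv_into N \<epsilon> (\<epsilon> p) = p" if "p \<in> N" for p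
    using num that by (auto simp: numbering_def bij_betw_def)
  have "(\<Sum>i\<in>{i. x i \<noteq> 0}. x i * a_explicit \<epsilon> i) =
      (\<Sum>i\<in>{1..card N}. x i * a_explicit \<epsilon> i)
      + (\<Sum>t\<in>{1..k}. x (card N + t) * a_explicit \<epsilon> (card N + t))"
    unfolding sum_H1_eq_sum_atLeastAtMost[OF x] by (rule sum_atLeastAtMost_add_split)
  also have "(\<Sum>i\<in>{1..card N}. x i * a_explicit \<epsilon> i) = (\<Sum>p\<in>N. adj \<xi> p * x (\<epsilon> p))"
    unfolding sum_numbering[OF num]
  proof (rule sum.cong[OF refl])
    fix p assume "p \<in> N"
    thus "x (\<epsilon> p) * a_explicit \<epsilon> (\<epsilon> p) = adj \<xi> p * x (\<epsilon> p)"
      using \<epsilon>[OF \<open>p \<in> N\<close>] by (simp add: a_explicit_def)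
  qed
  finally show ?thesis by (simp add: a_explicit_def mult.commute)
qed

end

context coprime_marked_pair
begin

lemma ext_form_gamma_k:
  assumes num1: "numbering N1 \<xi>1 \<epsilon>1" and num2: "numbering N2 \<xi>2 \<epsilon>2"
    and x: "x \<in> H1" "seq_len x \<le> card N1 + k" and y: "y \<in> H1" "seq_len y \<le> card N2 + k"
  defines "\<gamma> \<equiv> gamma_k \<epsilon>1 (card N1) \<epsilon>2 (card N2) x y k"
  shows "Delta N2 C2 \<xi>2 * X1.ext_form k (\<lambda>v. \<gamma> (Inl v))
      - Delta N1 C1 \<xi>1 * (\<Sum>b\<in>N2. adj2 \<xi>2 b * \<gamma> (Inr b)) =
    Delta N2 C2 \<xi>2 * (\<Sum>i\<in>{i. x i \<noteq> 0}. x i * X1.a_explicit \<epsilon>1 i)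
    - Delta N1 C1 \<xi>1 * (\<Sum>i\<in>{i. y i \<noteq> 0}. y i * X2.a_explicit \<epsilon>2 i)
    + Z_det k * (\<Sum>t\<in>{1..k}. y (card N2 + k + 1 - t))"
proof -
  define L1 where "L1 = Delta N1 C1 \<xi>1"
  define L2 where "L2 = Delta N2 C2 \<xi>2"
  define e1 where "e1 t = mdet (N1 - {\<xi>1}) C1 + int t * L1" for t
  define e2 where "e2 t = mdet (N2 - {\<xi>2}) C2 + int t * L2" for t
  let ?y = "\<lambda>t. y (card N2 + k + 1 - t)"
  have form1: "X1.ext_form k (\<lambda>v. \<gamma> (Inl v)) = (\<Sum>p\<in>N1. adj1 \<xi>1 p * x (\<epsilon>1 p))
      + (\<Sum>t\<in>{1..k}. e1 t * x (card N1 + t)) + (\<Sum>t\<in>{1..k}. e1 t * ?y t)"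
    using gamma_k_Inl_Inl[OF num1 _ y, of _ \<epsilon>2 x]
    by (simp add: X1.ext_form_def \<gamma>_def gamma_k_path e1_def L1_def distrib_left sum.distrib)
  have form2: "(\<Sum>b\<in>N2. adj2 \<xi>2 b * \<gamma> (Inr b)) = (\<Sum>b\<in>N2. adj2 \<xi>2 b * y (\<epsilon>2 b))"
    using gamma_k_Inr[OF num2 _ x, of _ \<epsilon>1 y] by (simp add: \<gamma>_def)
  have "(\<Sum>t\<in>{1..k}. e2 t * y (card N2 + t)) =
      (\<Sum>t\<in>{1..k}. e2 (k + 1 - t) * y (card N2 + (k + 1 - t)))"
    by (subst sum.atLeastAtMost_rev) simp
  also have "\<dots> = (\<Sum>t\<in>{1..k}. e2 (k + 1 - t) * ?y t)"
    by (rule sum.cong) auto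
  finally have rev: "(\<Sum>t\<in>{1..k}. e2 t * y (card N2 + t)) = (\<Sum>t\<in>{1..k}. e2 (k + 1 - t) * ?y t)" .
  have "L2 * (\<Sum>t\<in>{1..k}. e1 t * ?y t) + L1 * (\<Sum>t\<in>{1..k}. e2 (k + 1 - t) * ?y t) =
      (\<Sum>t\<in>{1..k}. (L2 * e1 t + L1 * e2 (k + 1 - t)) * ?y t)"
    by (simp add: sum_distrib_left sum.distrib[symmetric] algebra_simps)
  also have "\<dots> = (\<Sum>t\<in>{1..k}. Z_det k * ?y t)"
    by (rule sum.cong)
      (auto simp: e1_def e2_def L1_def L2_def Z_det_def Delta_def of_nat_diff algebra_simps)
  finally have comb: "L2 * (\<Sum>t\<in>{1..k}. e1 t * ?y t) + L1 * (\<Sum>t\<in>{1..k}. e2 (k + 1 - t) * ?y t) =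
      Z_det k * (\<Sum>t\<in>{1..k}. ?y t)" by (simp add: sum_distrib_left)
  show ?thesis
    unfolding form1 form2 X1.sum_a_explicit[OF num1 x] X2.sum_a_explicit[OF num2 y]
      e1_def[symmetric] e2_def[symmetric] L1_def[symmetric] L2_def[symmetric] rev
    using comb by (simp add: algebra_simps)
qed

lemma gamma_k_in_root_lattice_iff:
  assumes num1: "numbering N1 \<xi>1 \<epsilon>1" and num2: "numbering N2 \<xi>2 \<epsilon>2"
    and x: "x \<in> H1" and y: "y \<in> H1" and k: "1 \<le> k"
    and len: "gamma_len (card N1) (card N2) x y \<le> card N1 + card N2 + k"
    and cop: "coprime (Delta N1 C1 \<xi>1) (Delta N2 C2 \<xi>2)"
    and Delta1: "Delta N1 C1 \<xi>1 \<noteq> 0" and Delta2: "Delta N2 C2 \<xi>2 \<noteq> 0"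
  shows "in_root_lattice (Z_nodes N1 N2 k) (Z_mat C1 \<xi>1 C2 \<xi>2 k)
      (gamma_k \<epsilon>1 (card N1) \<epsilon>2 (card N2) x y k)
    \<longleftrightarrow> Z_det k dvd boxes N1 C1 \<xi>1 \<epsilon>1 N2 C2 \<xi>2 \<epsilon>2 x y"
proof -
  have "seq_len x \<le> card N1 + k" "seq_len y \<le> card N2 + k"
    using len by (auto simp: gamma_len_def)
  note form = ext_form_gamma_k[OF num1 num2 x this(1) y this(2)]
  have "boxes N1 C1 \<xi>1 \<epsilon>1 N2 C2 \<xi>2 \<epsilon>2 x y =
      Delta N2 C2 \<xi>2 * (\<Sum>i\<in>{i. x i \<noteq> 0}. x i * X1.a_explicit \<epsilon>1 i)
    - Delta N1 C1 \<xi>1 * (\<Sum>i\<in>{i. y i \<noteq> 0}. y i * X2.a_explicit \<epsilon>2 i)"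
    using a_seq_eq_a_explicit[OF X1.coprime_marked_diagram_axioms num1 Delta1]
      a_seq_eq_a_explicit[OF X2.coprime_marked_diagram_axioms num2 Delta2]
    by (simp add: boxes_def)
  thus ?thesis
    unfolding Z_root_lattice_iff_dvd[OF k cop Delta1] form
    by (simp add: dvd_add_left_iff)
qed

end

lemma dvd_add_mult_eventually_iff:
  fixes \<alpha> \<beta> b :: int
  assumes "\<beta> \<noteq> 0" and P: "\<And>k. k \<ge> k0 \<Longrightarrow> P k \<longleftrightarrow> \<alpha> + int k * \<beta> dvd b"
  shows "b = 0 \<longleftrightarrow> (\<exists>K. \<forall>k\<ge>K. P k)" and "b = 0 \<longleftrightarrow> infinite {k. P k}"
proof -
  define K0 where "K0 = max k0 (nat (\<bar>\<alpha>\<bar> + \<bar>b\<bar>) + 1)"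
  have zero: "b = 0" if "P k" "k \<ge> K0" for k
  proof -
    have "k \<ge> k0" "nat (\<bar>\<alpha>\<bar> + \<bar>b\<bar>) < k" using that(2) by (simp_all add: K0_def)
    hence "int k > \<bar>\<alpha>\<bar> + \<bar>b\<bar>" by linarith
    hence "\<bar>\<alpha> + int k * \<beta>\<bar> > \<bar>b\<bar>" by (rule abs_add_mult_gt[OF assms(1)])
    moreover have "\<alpha> + int k * \<beta> dvd b" using P \<open>k \<ge> k0\<close> \<open>P k\<close> by blast
    ultimately show ?thesis by (metis dvd_imp_le_int not_le)
  qed
  have all: "P k" if "b = 0" "k \<ge> k0" for k using P[OF that(2)] that(1) by simp
  show "b = 0 \<longleftrightarrow> (\<exists>K. \<forall>k\<ge>K. P k)"
  proof
    assume "\<exists>K. \<forall>k\<ge>K. P k"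
    then obtain K where "\<forall>k\<ge>K. P k" by blast
    thus "b = 0" using zero[of "max K K0"] by simp
  qed (use all in blast)
  show "b = 0 \<longleftrightarrow> infinite {k. P k}"
  proof
    assume "b = 0"
    hence "{k0..} \<subseteq> {k. P k}" using all by auto
    thus "infinite {k. P k}" using infinite_Ici infinite_super by blast
  next
    assume "infinite {k. P k}"
    then obtain k where "k \<ge> K0" "P k" unfolding infinite_nat_iff_unbounded_le by blast
    thus "b = 0" using zero by blast
  qed
qed

theorem corollary4p4:
  fixes N1 :: "'a set" and C1 :: "'a \<Rightarrow> 'a \<Rightarrow> int" and \<xi>1 :: 'a and \<epsilon>1 :: "'a \<Rightarrow> nat"
    and N2 :: "'b set" and C2 :: "'b \<Rightarrow> 'b \<Rightarrow> int" and \<xi>2 :: 'b and \<epsilon>2 :: "'b \<Rightarrow> nat"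
    and x y :: "nat \<Rightarrow> int"
  assumes "marked_diagram N1 C1 \<xi>1" and "marked_diagram N2 C2 \<xi>2"
    and "numbering N1 \<xi>1 \<epsilon>1" and "numbering N2 \<xi>2 \<epsilon>2"
    and "extensible_pair N1 C1 \<xi>1 N2 C2 \<xi>2"
    and "x \<in> H1" and "y \<in> H1"
  shows "(boxes N1 C1 \<xi>1 \<epsilon>1 N2 C2 \<xi>2 \<epsilon>2 x y = 0
          \<longleftrightarrow> (\<exists>K. \<forall>k\<ge>K. gamma_len (card N1) (card N2) x y \<le> card N1 + card N2 + k \<longrightarrow>
                  in_root_lattice (Z_nodes N1 N2 k) (Z_mat C1 \<xi>1 C2 \<xi>2 k)
                    (gamma_k \<epsilon>1 (card N1) \<epsilon>2 (card N2) x y k)))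
       \<and> (boxes N1 C1 \<xi>1 \<epsilon>1 N2 C2 \<xi>2 \<epsilon>2 x y = 0
          \<longleftrightarrow> infinite {k. gamma_len (card N1) (card N2) x y \<le> card N1 + card N2 + k \<and>
                  in_root_lattice (Z_nodes N1 N2 k) (Z_mat C1 \<xi>1 C2 \<xi>2 k)
                    (gamma_k \<epsilon>1 (card N1) \<epsilon>2 (card N2) x y k)})"
proof -
  let ?G = "gamma_len (card N1) (card N2) x y"
  let ?M = "\<lambda>k. in_root_lattice (Z_nodes N1 N2 k) (Z_mat C1 \<xi>1 C2 \<xi>2 k)
    (gamma_k \<epsilon>1 (card N1) \<epsilon>2 (card N2) x y k)"
  have ext: "extensible N1 C1 \<xi>1" "extensible N2 C2 \<xi>2"
    and cop: "coprime (Delta N1 C1 \<xi>1) (Delta N2 C2 \<xi>2)"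
    using assms(5) by (auto simp: extensible_pair_def coprime_iff_gcd_eq_1)
  obtain adj1 adj2 where "coprime_marked_pair N1 C1 \<xi>1 adj1 N2 C2 \<xi>2 adj2"
    using coprime_marked_diagram_exists[of N1 \<xi>1 C1] coprime_marked_diagram_exists[of N2 \<xi>2 C2]
      assms(1,2) ext by (auto simp: coprime_marked_pair_def marked_diagram_def sym_gcm_def gcm_def)
  then interpret coprime_marked_pair N1 C1 \<xi>1 adj1 N2 C2 \<xi>2 adj2 .
  have Delta: "Delta N1 C1 \<xi>1 \<noteq> 0" "Delta N2 C2 \<xi>2 \<noteq> 0" using ext by (auto simp: extensible_def)
  have "?M k \<longleftrightarrow> Z_det k dvd boxes N1 C1 \<xi>1 \<epsilon>1 N2 C2 \<xi>2 \<epsilon>2 x y" if "k \<ge> max 1 ?G" for k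
    using gamma_k_in_root_lattice_iff[OF assms(3,4,6,7) _ _ cop Delta] that by simp
  hence "(?G \<le> card N1 + card N2 + k \<longrightarrow> ?M k) \<longleftrightarrow> Z_det k dvd boxes N1 C1 \<xi>1 \<epsilon>1 N2 C2 \<xi>2 \<epsilon>2 x y"
    and "(?G \<le> card N1 + card N2 + k \<and> ?M k) \<longleftrightarrow> Z_det k dvd boxes N1 C1 \<xi>1 \<epsilon>1 N2 C2 \<xi>2 \<epsilon>2 x y"
    if "k \<ge> max 1 ?G" for k
    using that by auto
  note criteria = this[unfolded Z_det_eq]
  have "Delta N1 C1 \<xi>1 * Delta N2 C2 \<xi>2 \<noteq> 0" using Delta by simp
  from dvd_add_mult_eventually_iff(1)[OF this criteria(1)]
    dvd_add_mult_eventually_iff(2)[OF this criteria(2)]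
  show ?thesis by blast
qed

end
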